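(* Let $0<\epsilon<1$ and let $m_{1},\dots,m_{d},l_{1},\dots,l_{d},k_{1},\dots,k_{d}\in\mathbb{Z}_{>0}$ be chosen in the order $m_d,l_d,k_d,m_{d-1},l_{d-1},k_{d-1},\dots,m_1,l_1,k_1$, each sufficiently large in a manner depending on $\lambda$, $\epsilon$ and all previously chosen parameters (that is: $m_d$ large w.r.t. $\epsilon^{-1}$; $l_j$ large w.r.t. $m_j$; $k_j$ large w.r.t. $l_j$; and $m_j$ large w.r.t. $k_{j+1}$ for $1\le j<d$). Let $x,y\in\mathbb{R}^{d}$ with $\epsilon\le|x-y|\le\epsilon^{-1}$, and set $\zeta:=\frac{1}{2}(\delta_{x}+\delta_{y})$. Then there exists $1\le j\le d$ such that for $a:=\lfloor\frac{1}{2\chi_{j}}\log k_{j}\rfloor$, \[ \frac{1}{m_{j}}H\big(\zeta^{*k_{j}},\mathcal{E}_{l_{j}-a+m_{j}}\mid\mathcal{E}_{l_{j}-a}\vee\pi_{[d]\setminus\{j\}}^{-1}\mathcal{E}_{l_{j}-a+m_{j}}\big)>\chi_{j}-\epsilon. \]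
   Context: Fix $d\ge1$ and $\lambda=(\lambda_1,\dots,\lambda_d)\in(0,1)^d$ with $\lambda_1>\dots>\lambda_d$; logs base 2, $\chi_j:=-\log\lambda_j$. $\zeta^{*k}$ is the $k$-fold self-convolution. $\mathcal{E}_n$ ($n\in\mathbb{Z}$) is the partition of $\mathbb{R}^d$ into boxes $D_1\times\dots\times D_d$ with each $D_j$ of the form $[k2^{-\lfloor\chi_jn\rfloor},(k+1)2^{-\lfloor\chi_jn\rfloor})$, $k\in\mathbb{Z}$. $\pi_J$ is orthogonal projection onto $\mathrm{span}\{e_j:j\in J\}$ and $\pi_J^{-1}\mathcal{E}_n:=\{\pi_J^{-1}E:E\in\mathcal{E}_n\}$. $H(\mu,\mathcal{C}\mid\mathcal{D}):=\sum_{D\in\mathcal{D}}\mu(D)H(\mu_D,\mathcal{C})$ with $H(\mu,\mathcal{C})=-\sum_C\mu(C)\log\mu(C)$, and $\vee$ is common refinement. *)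

theory Defs
  imports "HOL-Probability.Probability"
begin

text \<open>Points of R^d are functions nat => real; coordinates 1..d are used,
  all other coordinates are required to be 0 where relevant.\<close>

definition chi :: "(nat \<Rightarrow> real) \<Rightarrow> nat \<Rightarrow> real" where
  "chi lam j = - log 2 (lam j)"

definition eucl_norm :: "nat \<Rightarrow> (nat \<Rightarrow> real) \<Rightarrow> real" where
  "eucl_norm d v = sqrt (\<Sum>i=1..d. (v i)\<^sup>2)"

definition conv_pmf :: "(nat \<Rightarrow> real) pmf \<Rightarrow> (nat \<Rightarrow> real) pmf \<Rightarrow> (nat \<Rightarrow> real) pmf" where
  "conv_pmf p q = map_pmf (\<lambda>(a, b). (\<lambda>i. a i + b i)) (pair_pmf p q)"

fun conv_pow :: "(nat \<Rightarrow> real) pmf \<Rightarrow> nat \<Rightarrow> (nat \<Rightarrow> real) pmf" where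
  "conv_pow p 0 = return_pmf (\<lambda>_. 0)"
| "conv_pow p (Suc k) = conv_pmf p (conv_pow p k)"

definition dyadic_part :: "nat \<Rightarrow> (nat \<Rightarrow> real) \<Rightarrow> int \<Rightarrow> (nat \<Rightarrow> real) set set" where
  "dyadic_part d lam n =
     {{v. \<forall>i\<in>{1..d}. real_of_int (c i) * 2 powr (- real_of_int \<lfloor>chi lam i * real_of_int n\<rfloor>) \<le> v i
            \<and> v i < (real_of_int (c i) + 1) * 2 powr (- real_of_int \<lfloor>chi lam i * real_of_int n\<rfloor>)}
      | c :: nat \<Rightarrow> int. True}"

definition proj :: "nat set \<Rightarrow> (nat \<Rightarrow> real) \<Rightarrow> (nat \<Rightarrow> real)" where
  "proj J v = (\<lambda>i. if i \<in> J then v i else 0)"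

definition preimage_part :: "nat set \<Rightarrow> (nat \<Rightarrow> real) set set \<Rightarrow> (nat \<Rightarrow> real) set set" where
  "preimage_part J \<E> = {proj J -` E | E. E \<in> \<E>}"

definition join :: "'a set set \<Rightarrow> 'a set set \<Rightarrow> 'a set set" where
  "join \<C> \<D> = {C \<inter> D | C D. C \<in> \<C> \<and> D \<in> \<D> \<and> C \<inter> D \<noteq> {}}"

definition entropy_part :: "'a pmf \<Rightarrow> 'a set set \<Rightarrow> real" where
  "entropy_part \<mu> \<C> = - (\<Sum>C\<in>{C\<in>\<C>. measure_pmf.prob \<mu> C \<noteq> 0}.
       measure_pmf.prob \<mu> C * log 2 (measure_pmf.prob \<mu> C))"

definition cond_entropy_part :: "'a pmf \<Rightarrow> 'a set set \<Rightarrow> 'a set set \<Rightarrow> real" where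
  "cond_entropy_part \<mu> \<C> \<D> = (\<Sum>D\<in>{D\<in>\<D>. measure_pmf.prob \<mu> D \<noteq> 0}.
       measure_pmf.prob \<mu> D * entropy_part (cond_pmf \<mu> D) \<C>)"

text \<open>Choosing m_j, l_j, k_j (j = d down to 1), in the order m_j, l_j, k_j,
  each sufficiently large depending on everything chosen before.\<close>
fun large_choice :: "nat \<Rightarrow> ((nat \<Rightarrow> nat) \<Rightarrow> (nat \<Rightarrow> nat) \<Rightarrow> (nat \<Rightarrow> nat) \<Rightarrow> bool)
     \<Rightarrow> (nat \<Rightarrow> nat) \<Rightarrow> (nat \<Rightarrow> nat) \<Rightarrow> (nat \<Rightarrow> nat) \<Rightarrow> bool" where
  "large_choice 0 P m l k = P m l k"
| "large_choice (Suc j) P m l k =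
     (\<forall>\<^sub>F a in sequentially. \<forall>\<^sub>F b in sequentially. \<forall>\<^sub>F c in sequentially.
        large_choice j P (m(Suc j := a)) (l(Suc j := b)) (k(Suc j := c)))"

end

(* The k-fold self-convolution of (delta_x + delta_y)/2 is the image of the binomial
   distribution B(k, 1/2) under i |-> k x + i (y - x), so its atoms lie on a line with spacing
   y - x and their weights are almost constant on windows of length about sqrt k around k/2.
   Take j to be the first coordinate in which |y_j - x_j| is not small compared with the scales
   chosen for the later coordinates. At the coarse level l_j - a a cell contains about
   L = 2^(-chi_j (l_j - a)) / |y_j - x_j| consecutive atoms along coordinate j, and L is small
   compared with sqrt k_j; in every other coordinate the central atoms span less than one cell
   of the fine level, because chi_t > chi_j for t > j and |y_t - x_t| is tiny for t < j. So
   for all but a small-probability set of atoms the conditioning cell contains a whole run of L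
   atoms of nearly equal weight, of which a fine cell catches only a 2^(-chi_j m_j + 1) fraction;
   this gives conditional entropy at least chi_j m_j - 2 on that set. *)

theory Submission
  imports Defs
begin

lemma large_choice_intro:
  fixes Am Al Ak :: "nat \<Rightarrow> (nat \<Rightarrow> nat) \<Rightarrow> (nat \<Rightarrow> nat) \<Rightarrow> (nat \<Rightarrow> nat) \<Rightarrow> nat \<Rightarrow> bool"
  assumes ev_m: "\<And>t m l k. eventually (Am t m l k) sequentially"
    and ev_l: "\<And>t m l k. eventually (Al t m l k) sequentially"
    and ev_k: "\<And>t m l k. eventually (Ak t m l k) sequentially"
    and dep_m: "\<And>t m l k m' l' k'. \<forall>i>t. m i = m' i \<and> l i = l' i \<and> k i = k' i \<Longrightarrow>
      Am t m l k = Am t m' l' k'"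
    and dep_l: "\<And>t m l k m' l' k'. \<forall>i>t. m i = m' i \<and> l i = l' i \<and> k i = k' i \<Longrightarrow> m t = m' t \<Longrightarrow>
      Al t m l k = Al t m' l' k'"
    and dep_k: "\<And>t m l k m' l' k'. \<forall>i>t. m i = m' i \<and> l i = l' i \<and> k i = k' i \<Longrightarrow> m t = m' t \<Longrightarrow>
      l t = l' t \<Longrightarrow> Ak t m l k = Ak t m' l' k'"
    and P: "\<And>m' l' k'. \<forall>i>j. m' i = m i \<and> l' i = l i \<and> k' i = k i \<Longrightarrow>
      \<forall>t\<in>{1..j}. Am t m' l' k' (m' t) \<and> Al t m' l' k' (l' t) \<and> Ak t m' l' k' (k' t) \<Longrightarrow> P m' l' k'"
  shows "large_choice j P m l k"
  using P
proof (induction j arbitrary: m l k)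
  case 0
  then show ?case by simp
next
  case (Suc j)
  let ?t = "Suc j"
  have step: "large_choice j P (m(?t := a)) (l(?t := b)) (k(?t := c))"
    if a: "Am ?t m l k a" and b: "Al ?t (m(?t := a)) l k b" and c: "Ak ?t (m(?t := a)) (l(?t := b)) k c"
    for a b c
  proof (rule Suc.IH)
    fix m' l' k'
    assume agree: "\<forall>i>j. m' i = (m(?t := a)) i \<and> l' i = (l(?t := b)) i \<and> k' i = (k(?t := c)) i"
      and below: "\<forall>t\<in>{1..j}. Am t m' l' k' (m' t) \<and> Al t m' l' k' (l' t) \<and> Ak t m' l' k' (k' t)"
    have above: "\<forall>i>?t. m i = m' i \<and> l i = l' i \<and> k i = k' i" using agree by auto
    have "Am ?t m' l' k' (m' ?t)" using a dep_m[OF above] agree by auto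
    moreover have "Al ?t m' l' k' (l' ?t)"
      using b dep_l[where t = ?t and m = "m(?t := a)" and l = l and k = k and m' = m' and l' = l' and k' = k'] agree by auto
    moreover have "Ak ?t m' l' k' (k' ?t)"
      using c dep_k[where t = ?t and m = "m(?t := a)" and l = "l(?t := b)" and k = k and m' = m' and l' = l' and k' = k'] agree by auto
    ultimately have "\<forall>t\<in>{1..?t}. Am t m' l' k' (m' t) \<and> Al t m' l' k' (l' t) \<and> Ak t m' l' k' (k' t)"
      using below by (auto simp: le_Suc_eq)
    then show "P m' l' k'"
      using Suc.prems[of m' l' k'] above by auto
  qed
  show ?case unfolding large_choice.simps
    by (rule eventually_mono[OF ev_m], rule eventually_mono[OF ev_l],
        rule eventually_mono[OF ev_k], erule (2) step)
qed

section \<open>Entropy of partitions\<close>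

lemma finite_nonnull_cells:
  assumes "finite (set_pmf \<mu>)" and "disjoint \<C>"
  shows "finite {C\<in>\<C>. measure_pmf.prob \<mu> C \<noteq> 0}"
proof -
  let ?F = "{C\<in>\<C>. measure_pmf.prob \<mu> C \<noteq> 0}"
  have "\<exists>z. z \<in> C \<inter> set_pmf \<mu>" if "C \<in> ?F" for C
    using that measure_Int_set_pmf[of \<mu> C] by (metis (mono_tags, lifting) all_not_in_conv mem_Collect_eq measure_empty)
  then obtain pt where pt: "\<And>C. C \<in> ?F \<Longrightarrow> pt C \<in> C \<inter> set_pmf \<mu>" by metis
  have "inj_on pt ?F"
  proof (rule inj_onI)
    fix A B assume "A \<in> ?F" "B \<in> ?F" "pt A = pt B"
    then show "A = B"
      using pt disjointD[OF \<open>disjoint \<C>\<close>, of A B] by (metis (no_types, lifting) IntE IntI empty_iff mem_Collect_eq)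
  qed
  moreover have "pt ` ?F \<subseteq> set_pmf \<mu>" using pt by auto
  ultimately show ?thesis using inj_on_finite assms(1) by blast
qed

lemma sum_nonnull_cells_eq_1:
  assumes "finite (set_pmf \<mu>)" and "disjoint \<C>" and "\<Union>\<C> = UNIV"
  shows "(\<Sum>C\<in>{C\<in>\<C>. measure_pmf.prob \<mu> C \<noteq> 0}. measure_pmf.prob \<mu> C) = 1"
proof -
  let ?F = "{C\<in>\<C>. measure_pmf.prob \<mu> C \<noteq> 0}"
  have "set_pmf \<mu> \<subseteq> \<Union>?F"
  proof
    fix z assume z: "z \<in> set_pmf \<mu>"
    then obtain C where "C \<in> \<C>" "z \<in> C" using assms(3) by blast
    then show "z \<in> \<Union>?F" using measure_pmf_posI[OF z] by fastforce
  qed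
  then have "measure_pmf.prob \<mu> (\<Union>?F) = 1"
    by (simp add: measure_pmf.prob_eq_1 AE_measure_pmf_iff subset_eq)
  moreover have "measure_pmf.prob \<mu> (\<Union>?F) = (\<Sum>C\<in>?F. measure_pmf.prob \<mu> C)"
    using finite_nonnull_cells[OF assms(1,2)] pairwise_subset[OF assms(2)]
    by (intro measure_Union') (auto simp: measure_pmf.fmeasurable_eq_sets)
  ultimately show ?thesis by simp
qed

lemma entropy_part_nonneg: "entropy_part \<mu> \<C> \<ge> 0"
proof -
  have "measure_pmf.prob \<mu> C * log 2 (measure_pmf.prob \<mu> C) \<le> 0" for C
    by (cases "measure_pmf.prob \<mu> C = 0") (auto intro!: mult_nonneg_nonpos simp: zero_less_measure_iff)
  then show ?thesis unfolding entropy_part_def by (simp add: sum_nonpos)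
qed

lemma cond_entropy_part_nonneg: "cond_entropy_part \<mu> \<C> \<D> \<ge> 0"
  unfolding cond_entropy_part_def by (intro sum_nonneg mult_nonneg_nonneg entropy_part_nonneg) auto

lemma entropy_part_ge_neg_log:
  assumes "finite (set_pmf \<mu>)" and "disjoint \<C>" and "\<Union>\<C> = UNIV" and "q > 0"
    and small: "\<And>C. C \<in> \<C> \<Longrightarrow> measure_pmf.prob \<mu> C \<le> q"
  shows "entropy_part \<mu> \<C> \<ge> - log 2 q"
proof -
  let ?F = "{C\<in>\<C>. measure_pmf.prob \<mu> C \<noteq> 0}"
  have "- log 2 q = (\<Sum>C\<in>?F. measure_pmf.prob \<mu> C * (- log 2 q))"
    using sum_nonnull_cells_eq_1[OF assms(1-3)] by (simp only: sum_distrib_right[symmetric])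
  also have "\<dots> \<le> (\<Sum>C\<in>?F. measure_pmf.prob \<mu> C * (- log 2 (measure_pmf.prob \<mu> C)))"
  proof (rule sum_mono)
    fix C assume C: "C \<in> ?F"
    then have "measure_pmf.prob \<mu> C > 0" by (simp add: zero_less_measure_iff)
    then show "measure_pmf.prob \<mu> C * (- log 2 q) \<le> measure_pmf.prob \<mu> C * (- log 2 (measure_pmf.prob \<mu> C))"
      using small C by (intro mult_left_mono le_imp_neg_le log_mono) auto
  qed
  also have "\<dots> = entropy_part \<mu> \<C>"
    unfolding entropy_part_def by (simp add: sum_negf[symmetric])
  finally show ?thesis .
qed

lemma measure_cond_pmf:
  assumes "finite (set_pmf \<mu>)" and "set_pmf \<mu> \<inter> D \<noteq> {}"
  shows "measure_pmf.prob (cond_pmf \<mu> D) C = measure_pmf.prob \<mu> (C \<inter> D) / measure_pmf.prob \<mu> D"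
proof -
  have "measure_pmf.prob (cond_pmf \<mu> D) C = measure_pmf.prob (cond_pmf \<mu> D) (C \<inter> set_pmf (cond_pmf \<mu> D))"
    by (simp add: measure_Int_set_pmf)
  also have "\<dots> = (\<Sum>z\<in>C \<inter> set_pmf (cond_pmf \<mu> D). pmf (cond_pmf \<mu> D) z)"
    using assms by (intro measure_measure_pmf_finite) (simp add: set_cond_pmf)
  also have "\<dots> = (\<Sum>z\<in>C \<inter> D \<inter> set_pmf \<mu>. pmf \<mu> z / measure_pmf.prob \<mu> D)"
    using assms(2) by (intro sum.cong) (auto simp: pmf_cond set_cond_pmf)
  also have "\<dots> = measure_pmf.prob \<mu> (C \<inter> D \<inter> set_pmf \<mu>) / measure_pmf.prob \<mu> D"
    using assms(1) by (simp add: sum_divide_distrib measure_measure_pmf_finite)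
  finally show ?thesis by (simp add: measure_Int_set_pmf)
qed

lemma cond_entropy_part_ge:
  assumes "finite (set_pmf \<mu>)" and "disjoint \<D>" and "h \<ge> 0"
    and good: "\<And>z. z \<in> A \<Longrightarrow> z \<in> set_pmf \<mu> \<Longrightarrow> \<exists>D\<in>\<D>. z \<in> D \<and> entropy_part (cond_pmf \<mu> D) \<C> \<ge> h"
  shows "cond_entropy_part \<mu> \<C> \<D> \<ge> h * measure_pmf.prob \<mu> A"
proof -
  let ?F = "{D\<in>\<D>. measure_pmf.prob \<mu> D \<noteq> 0}"
  let ?G = "{D\<in>?F. entropy_part (cond_pmf \<mu> D) \<C> \<ge> h}"
  have fin: "finite ?G" using finite_nonnull_cells[OF assms(1,2)] by (rule rev_finite_subset) auto
  have "A \<inter> set_pmf \<mu> \<subseteq> \<Union>?G"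
  proof
    fix z assume z: "z \<in> A \<inter> set_pmf \<mu>"
    then obtain D where "D \<in> \<D>" "z \<in> D" "entropy_part (cond_pmf \<mu> D) \<C> \<ge> h" using good by blast
    then show "z \<in> \<Union>?G" using measure_pmf_posI[of z \<mu> D] z by fastforce
  qed
  then have "measure_pmf.prob \<mu> A \<le> measure_pmf.prob \<mu> (\<Union>?G)"
    by (subst measure_Int_set_pmf[symmetric]) (intro measure_pmf.finite_measure_mono; simp)
  also have "\<dots> = (\<Sum>D\<in>?G. measure_pmf.prob \<mu> D)"
    using fin pairwise_subset[OF assms(2)] by (intro measure_Union') (auto simp: measure_pmf.fmeasurable_eq_sets)
  finally have "h * measure_pmf.prob \<mu> A \<le> h * (\<Sum>D\<in>?G. measure_pmf.prob \<mu> D)"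
    using \<open>h \<ge> 0\<close> by (rule mult_left_mono)
  also have "\<dots> = (\<Sum>D\<in>?G. measure_pmf.prob \<mu> D * h)"
    by (simp add: sum_distrib_left mult.commute)
  also have "\<dots> \<le> (\<Sum>D\<in>?G. measure_pmf.prob \<mu> D * entropy_part (cond_pmf \<mu> D) \<C>)"
    by (rule sum_mono) (auto intro!: mult_left_mono)
  also have "\<dots> \<le> cond_entropy_part \<mu> \<C> \<D>"
    unfolding cond_entropy_part_def using finite_nonnull_cells[OF assms(1,2)]
    by (intro sum_mono2) (auto intro!: mult_nonneg_nonneg entropy_part_nonneg)
  finally show ?thesis .
qed

lemma floor_divide_eq_iff:
  assumes "(s::real) > 0"
  shows "\<lfloor>u / s\<rfloor> = c \<longleftrightarrow> real_of_int c * s \<le> u \<and> u < (real_of_int c + 1) * s"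
  using assms by (simp add: floor_eq_iff pos_le_divide_eq pos_divide_less_eq)

lemma card_le_of_subset_interval:
  fixes lo hi :: real
  assumes "A \<subseteq> {i::nat. lo \<le> real i \<and> real i \<le> hi}" and "lo \<le> hi"
  shows "real (card A) \<le> hi - lo + 1"
proof -
  have "int ` A \<subseteq> {\<lceil>lo\<rceil>..\<lfloor>hi\<rfloor>}"
    using assms(1) by (auto simp: ceiling_le_iff le_floor_iff)
  then have "card (int ` A) \<le> nat (\<lfloor>hi\<rfloor> - \<lceil>lo\<rceil> + 1)"
    using card_mono[of "{\<lceil>lo\<rceil>..\<lfloor>hi\<rfloor>}"] by simp
  moreover have "real (nat (\<lfloor>hi\<rfloor> - \<lceil>lo\<rceil> + 1)) \<le> hi - lo + 1"
  proof (cases "\<lfloor>hi\<rfloor> - \<lceil>lo\<rceil> + 1 \<ge> 0")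
    case True
    then have "real (nat (\<lfloor>hi\<rfloor> - \<lceil>lo\<rceil> + 1)) = real_of_int \<lfloor>hi\<rfloor> - real_of_int \<lceil>lo\<rceil> + 1" by simp
    then show ?thesis using of_int_floor_le[of hi] le_of_int_ceiling[of lo] by linarith
  qed (use assms(2) in simp)
  ultimately show ?thesis by (simp add: card_image)
qed

lemma card_open_interval_ge:
  fixes lo hi :: real
  assumes "0 \<le> lo"
  shows "hi - lo - 1 \<le> real (card {i::nat. lo < real i \<and> real i < hi})"
proof -
  have "nat z \<in> {i::nat. lo < real i \<and> real i < hi}" if "z \<in> {\<lfloor>lo\<rfloor> + 1..\<lceil>hi\<rceil> - 1}" for z
  proof -
    have "0 \<le> \<lfloor>lo\<rfloor>" "\<lfloor>lo\<rfloor> + 1 \<le> z" "z \<le> \<lceil>hi\<rceil> - 1" using assms that by auto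
    then have "\<lfloor>lo\<rfloor> < z" "z < \<lceil>hi\<rceil>" "0 \<le> z" by linarith+
    then show ?thesis by (simp add: floor_less_iff less_ceiling_iff)
  qed
  then have "nat ` {\<lfloor>lo\<rfloor> + 1..\<lceil>hi\<rceil> - 1} \<subseteq> {i::nat. lo < real i \<and> real i < hi}" by blast
  moreover have "inj_on nat {\<lfloor>lo\<rfloor> + 1..\<lceil>hi\<rceil> - 1}"
  proof (rule inj_onI)
    fix z z' assume "z \<in> {\<lfloor>lo\<rfloor> + 1..\<lceil>hi\<rceil> - 1}" "z' \<in> {\<lfloor>lo\<rfloor> + 1..\<lceil>hi\<rceil> - 1}" "nat z = nat z'"
    moreover have "0 \<le> \<lfloor>lo\<rfloor>" using assms by simp
    ultimately show "z = z'" by (simp add: eq_nat_nat_iff)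
  qed
  moreover have "finite {i::nat. lo < real i \<and> real i < hi}"
    by (rule finite_subset[of _ "{..<nat \<lceil>hi\<rceil>}"]) (auto simp: zless_nat_eq_int_zless less_ceiling_iff)
  ultimately have "card {\<lfloor>lo\<rfloor> + 1..\<lceil>hi\<rceil> - 1} \<le> card {i::nat. lo < real i \<and> real i < hi}"
    by (metis card_image card_mono)
  moreover have "hi - lo - 1 \<le> real (nat (\<lceil>hi\<rceil> - 1 - (\<lfloor>lo\<rfloor> + 1) + 1))"
    using of_int_floor_le[of lo] le_of_int_ceiling[of hi] by linarith
  ultimately show ?thesis by simp
qed

lemma affine_floor_level_interval:
  fixes \<alpha> \<beta> s :: real
  assumes "\<beta> \<noteq> 0" and "s > 0"
  obtains lo where "\<And>r. \<lfloor>(\<alpha> + r * \<beta>) / s\<rfloor> = c \<Longrightarrow> lo \<le> r \<and> r \<le> lo + s / \<bar>\<beta>\<bar>"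
    and "\<And>r. lo < r \<Longrightarrow> r < lo + s / \<bar>\<beta>\<bar> \<Longrightarrow> \<lfloor>(\<alpha> + r * \<beta>) / s\<rfloor> = c"
proof (cases "\<beta> > 0")
  case True
  have len: "s / \<bar>\<beta>\<bar> = ((real_of_int c + 1) * s - \<alpha>) / \<beta> - (real_of_int c * s - \<alpha>) / \<beta>"
    using True by (simp add: diff_divide_distrib[symmetric] algebra_simps)
  show ?thesis
    by (rule that[of "(real_of_int c * s - \<alpha>) / \<beta>"]; unfold len floor_divide_eq_iff[OF assms(2)])
      (use True assms(2) in \<open>auto simp: pos_divide_le_eq pos_le_divide_eq pos_divide_less_eq pos_less_divide_eq algebra_simps\<close>)
next
  case False
  then have neg: "\<beta> < 0" using assms(1) by simp
  have len: "s / \<bar>\<beta>\<bar> = (real_of_int c * s - \<alpha>) / \<beta> - ((real_of_int c + 1) * s - \<alpha>) / \<beta>"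
    using neg by (simp add: diff_divide_distrib[symmetric] algebra_simps)
  show ?thesis
    by (rule that[of "((real_of_int c + 1) * s - \<alpha>) / \<beta>"]; unfold len floor_divide_eq_iff[OF assms(2)])
      (use neg assms(2) in \<open>auto simp: neg_divide_le_eq neg_le_divide_eq neg_divide_less_eq neg_less_divide_eq algebra_simps\<close>)
qed

lemma card_le_of_subset_affine_near:
  fixes \<alpha> \<beta> z c :: real
  assumes "\<beta> \<noteq> 0" and "c \<ge> 0" and "A \<subseteq> {i::nat. \<bar>\<alpha> + real i * \<beta> - z\<bar> \<le> c}"
  shows "real (card A) \<le> 2 * c / \<bar>\<beta>\<bar> + 1"
proof -
  define lo where "lo = (z - \<alpha>) / \<beta> - c / \<bar>\<beta>\<bar>"
  have "\<bar>real i - (z - \<alpha>) / \<beta>\<bar> \<le> c / \<bar>\<beta>\<bar>" if "i \<in> A" for i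
  proof -
    have "real i - (z - \<alpha>) / \<beta> = (\<alpha> + real i * \<beta> - z) / \<beta>" using assms(1) by (simp add: field_simps)
    then show ?thesis using assms(3) that by (auto simp: abs_divide divide_right_mono)
  qed
  then have "A \<subseteq> {i::nat. lo \<le> real i \<and> real i \<le> lo + 2 * c / \<bar>\<beta>\<bar>}"
    unfolding lo_def by (force simp: abs_le_iff)
  from card_le_of_subset_interval[OF this] show ?thesis using assms(2) by simp
qed

lemma floor_neq_imp_between:
  fixes a b :: real
  assumes "\<lfloor>a\<rfloor> \<noteq> \<lfloor>b\<rfloor>"
  shows "min a b < real_of_int (max \<lfloor>a\<rfloor> \<lfloor>b\<rfloor>) \<and> real_of_int (max \<lfloor>a\<rfloor> \<lfloor>b\<rfloor>) \<le> max a b"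
proof (cases "\<lfloor>a\<rfloor> < \<lfloor>b\<rfloor>")
  case True
  then have "a < real_of_int \<lfloor>b\<rfloor>" by (meson floor_less_iff)
  then show ?thesis using True by (simp add: max_def min_def) (smt (verit) of_int_floor_le)
next
  case False
  then have "\<lfloor>b\<rfloor> < \<lfloor>a\<rfloor>" using assms by simp
  then have "b < real_of_int \<lfloor>a\<rfloor>" by (meson floor_less_iff)
  then show ?thesis using \<open>\<lfloor>b\<rfloor> < \<lfloor>a\<rfloor>\<close> by (simp add: max_def min_def) (smt (verit) of_int_floor_le)
qed

lemma floor_neq_common_jump:
  fixes a b c e :: real
  assumes "\<lfloor>a\<rfloor> \<noteq> \<lfloor>b\<rfloor>" and "\<lfloor>c\<rfloor> \<noteq> \<lfloor>e\<rfloor>"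
    and "\<bar>a - c\<bar> < 1" "\<bar>a - e\<bar> < 1" "\<bar>b - c\<bar> < 1" "\<bar>b - e\<bar> < 1"
  shows "max \<lfloor>a\<rfloor> \<lfloor>b\<rfloor> = max \<lfloor>c\<rfloor> \<lfloor>e\<rfloor>"
proof -
  define z0 where "z0 = max \<lfloor>a\<rfloor> \<lfloor>b\<rfloor>"
  define z1 where "z1 = max \<lfloor>c\<rfloor> \<lfloor>e\<rfloor>"
  have "min a b < real_of_int z0" "real_of_int z0 \<le> max a b"
    "min c e < real_of_int z1" "real_of_int z1 \<le> max c e"
    using floor_neq_imp_between[OF assms(1)] floor_neq_imp_between[OF assms(2)] z0_def z1_def by auto
  then have "real_of_int z0 - real_of_int z1 < 1" "real_of_int z1 - real_of_int z0 < 1"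
    using assms(3-6) by (auto simp: min_def max_def abs_less_iff split: if_splits)
  then show ?thesis unfolding z0_def[symmetric] z1_def[symmetric] by linarith
qed

lemma disjoint_iff_common_point:
  "disjoint \<C> \<longleftrightarrow> (\<forall>A\<in>\<C>. \<forall>B\<in>\<C>. \<forall>z. z \<in> A \<longrightarrow> z \<in> B \<longrightarrow> A = B)"
  unfolding disjoint_def by blast

definition dyadic_width :: "(nat \<Rightarrow> real) \<Rightarrow> nat \<Rightarrow> int \<Rightarrow> real" where
  "dyadic_width lam t n = 2 powr (- real_of_int \<lfloor>chi lam t * real_of_int n\<rfloor>)"

definition dyadic_index :: "(nat \<Rightarrow> real) \<Rightarrow> nat \<Rightarrow> int \<Rightarrow> (nat \<Rightarrow> real) \<Rightarrow> int" where
  "dyadic_index lam t n z = \<lfloor>z t / dyadic_width lam t n\<rfloor>"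

lemma dyadic_width_pos: "dyadic_width lam t n > 0"
  by (simp add: dyadic_width_def)

lemma dyadic_width_antimono:
  "chi lam t > 0 \<Longrightarrow> n \<le> n' \<Longrightarrow> dyadic_width lam t n' \<le> dyadic_width lam t n"
  unfolding dyadic_width_def by (intro powr_mono) (auto intro!: floor_mono mult_left_mono)

lemma dyadic_part_eq:
  "dyadic_part d lam n = {{v. \<forall>t\<in>{1..d}. dyadic_index lam t n v = c t} | c. True}"
proof -
  have "{v. \<forall>i\<in>{1..d}. real_of_int (c i) * 2 powr (- real_of_int \<lfloor>chi lam i * real_of_int n\<rfloor>) \<le> v i
            \<and> v i < (real_of_int (c i) + 1) * 2 powr (- real_of_int \<lfloor>chi lam i * real_of_int n\<rfloor>)}
        = {v. \<forall>t\<in>{1..d}. dyadic_index lam t n v = c t}" for c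
    using floor_divide_eq_iff[OF dyadic_width_pos] unfolding dyadic_index_def dyadic_width_def by simp
  then show ?thesis unfolding dyadic_part_def by simp
qed

lemma mem_dyadic_part_iff:
  assumes "C \<in> dyadic_part d lam n" and "z \<in> C"
  shows "z' \<in> C \<longleftrightarrow> (\<forall>t\<in>{1..d}. dyadic_index lam t n z' = dyadic_index lam t n z)"
  using assms unfolding dyadic_part_eq by auto

lemma Union_dyadic_part: "\<Union>(dyadic_part d lam n) = UNIV"
proof -
  have "z \<in> \<Union>(dyadic_part d lam n)" for z
  proof
    show "{v. \<forall>t\<in>{1..d}. dyadic_index lam t n v = dyadic_index lam t n z} \<in> dyadic_part d lam n"
      unfolding dyadic_part_eq by (intro CollectI exI[of _ "\<lambda>t. dyadic_index lam t n z"]) simp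
  qed simp
  then show ?thesis by blast
qed

lemma disjoint_dyadic_part: "disjoint (dyadic_part d lam n)"
  unfolding disjoint_iff_common_point dyadic_part_eq by auto

lemma Union_preimage_part:
  assumes "\<Union>\<E> = UNIV"
  shows "\<Union>(preimage_part J \<E>) = UNIV"
proof -
  have "z \<in> \<Union>(preimage_part J \<E>)" for z
  proof -
    obtain E where "E \<in> \<E>" "proj J z \<in> E" using assms by blast
    then show ?thesis unfolding preimage_part_def by blast
  qed
  then show ?thesis by blast
qed

lemma disjoint_preimage_part: "disjoint \<E> \<Longrightarrow> disjoint (preimage_part J \<E>)"
  unfolding disjoint_iff_common_point preimage_part_def by auto

lemma Union_join:
  assumes "\<Union>\<C> = UNIV" and "\<Union>\<D> = UNIV"
  shows "\<Union>(join \<C> \<D>) = UNIV"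
proof -
  have "z \<in> \<Union>(join \<C> \<D>)" for z
  proof -
    obtain C D where "C \<in> \<C>" "z \<in> C" "D \<in> \<D>" "z \<in> D" using assms by blast
    then show ?thesis unfolding join_def by blast
  qed
  then show ?thesis by blast
qed

lemma disjoint_join:
  assumes "disjoint \<C>" and "disjoint \<D>"
  shows "disjoint (join \<C> \<D>)"
  unfolding disjoint_iff_common_point
proof (intro ballI allI impI)
  fix A B z assume "A \<in> join \<C> \<D>" "B \<in> join \<C> \<D>" "z \<in> A" "z \<in> B"
  then obtain C D C' D' where "A = C \<inter> D" "B = C' \<inter> D'" "C \<in> \<C>" "C' \<in> \<C>" "D \<in> \<D>" "D' \<in> \<D>"
    "z \<in> C" "z \<in> C'" "z \<in> D" "z \<in> D'"
    unfolding join_def by blast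
  then show "A = B" using assms unfolding disjoint_iff_common_point by metis
qed

section \<open>Self-convolutions of a two-point measure\<close>

definition line_point :: "(nat \<Rightarrow> real) \<Rightarrow> (nat \<Rightarrow> real) \<Rightarrow> nat \<Rightarrow> nat \<Rightarrow> nat \<Rightarrow> real" where
  "line_point x y k i = (\<lambda>t. real k * x t + real i * (y t - x t))"

lemma pmf_of_set_two_eq_bernoulli:
  assumes "x \<noteq> y"
  shows "pmf_of_set {x, y} = map_pmf (\<lambda>b. if b then y else x) (bernoulli_pmf (1/2))"
proof -
  have "map_pmf (\<lambda>b. if b then y else x) (pmf_of_set UNIV) = pmf_of_set ((\<lambda>b. if b then y else x) ` UNIV)"
    using assms by (intro map_pmf_of_set_inj) (auto simp: inj_on_def)
  moreover have "(\<lambda>b. if b then y else x) ` UNIV = {x, y}" by (auto simp: UNIV_bool)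
  ultimately show ?thesis by (simp add: bernoulli_pmf_half_conv_pmf_of_set)
qed

lemma conv_pow_pmf_of_set_two:
  assumes "x \<noteq> y"
  shows "conv_pow (pmf_of_set {x, y}) k = map_pmf (line_point x y k) (binomial_pmf k (1/2))"
proof (induction k)
  case 0
  then show ?case by (simp add: binomial_pmf_0 line_point_def)
next
  case (Suc k)
  have "conv_pow (pmf_of_set {x, y}) (Suc k) =
     map_pmf (\<lambda>(a, b). \<lambda>i. a i + b i) (pair_pmf (map_pmf (\<lambda>b. if b then y else x) (bernoulli_pmf (1/2)))
       (map_pmf (line_point x y k) (binomial_pmf k (1/2))))"
    by (simp only: conv_pow.simps conv_pmf_def Suc.IH) (simp add: pmf_of_set_two_eq_bernoulli[OF assms])
  also have "\<dots> = map_pmf (line_point x y (Suc k)) (binomial_pmf (Suc k) (1/2))"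
    by (simp add: binomial_pmf_Suc pair_pmf_def map_pmf_def bind_assoc_pmf bind_return_pmf line_point_def
        algebra_simps fun_eq_iff; intro bind_pmf_cong refl; auto simp: fun_eq_iff)
  finally show ?case .
qed

section \<open>Binomial weights near the centre\<close>

abbreviation binom_half :: "nat \<Rightarrow> nat \<Rightarrow> real" where
  "binom_half k \<equiv> pmf (binomial_pmf k (1/2))"

lemma binom_half_eq: "binom_half k i = real (k choose i) / 2 ^ k"
proof (cases "i \<le> k")
  case True
  then have "(1/2::real) ^ i * (1/2) ^ (k - i) = (1/2) ^ k" by (simp flip: power_add)
  then show ?thesis by (simp add: power_divide)
qed (simp add: binomial_eq_0)

declare pmf_binomial[simp del]

lemma binom_half_Suc:
  assumes "i < k"
  shows "binom_half k (Suc i) * real (Suc i) = binom_half k i * (real k - real i)"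
proof -
  obtain n where n: "k = Suc n" using assms by (cases k) auto
  have "Suc i * (Suc n choose Suc i) = Suc n * (n choose i)" by (rule Suc_times_binomial)
  moreover have "(Suc n - i) * (Suc n choose i) = Suc n * (n choose i)"
    using binomial_absorb_comp[of "Suc n" i] by simp
  ultimately have "(k choose Suc i) * Suc i = (k choose i) * (k - i)" using n by (simp add: mult.commute)
  then have "real (k choose Suc i) * real (Suc i) = real (k choose i) * (real k - real i)"
    using assms by (metis of_nat_diff of_nat_mult less_imp_le)
  then show ?thesis by (simp add: binom_half_eq field_simps del: of_nat_Suc)
qed

lemma binom_half_Suc_ratio_bounds:
  fixes T :: real
  assumes T: "0 \<le> T" "T < real k / 2"
    and i: "real k / 2 - T \<le> real i" "real (Suc i) \<le> real k / 2 + T"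
  defines "r \<equiv> (real k / 2 - T) / (real k / 2 + T)"
  shows "r * binom_half k i \<le> binom_half k (Suc i)" and "r * binom_half k (Suc i) \<le> binom_half k i"
proof -
  have ik: "i < k" using i T by simp
  have pos: "real k / 2 + T > 0" using i T by linarith
  have rle: "r * (real k / 2 + T) = real k / 2 - T" using pos by (simp add: r_def)
  have r0: "0 \<le> r" using T i by (simp add: r_def)
  note step = binom_half_Suc[OF ik]
  have up: "r * real (Suc i) \<le> real k - real i"
    using mult_left_mono[OF i(2) r0] rle i by linarith
  have "r * binom_half k i * real (Suc i) \<le> binom_half k (Suc i) * real (Suc i)"
    unfolding step using mult_right_mono[OF up pmf_nonneg[of "binomial_pmf k (1/2)" i]] by (simp add: mult_ac)
  then show "r * binom_half k i \<le> binom_half k (Suc i)" by (simp add: mult_le_cancel_right)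
  have down: "r * (real k - real i) \<le> real (Suc i)"
    using mult_left_mono[of "real k - real i" "real k / 2 + T" r] r0 rle i by linarith
  have "r * binom_half k (Suc i) * (real k - real i) \<le> binom_half k i * (real k - real i)"
    unfolding step[symmetric]
    using mult_right_mono[OF down pmf_nonneg[of "binomial_pmf k (1/2)" "Suc i"]] by (simp add: mult_ac)
  then show "r * binom_half k (Suc i) \<le> binom_half k i" using ik by (simp add: mult_le_cancel_right)
qed

lemma binom_half_ratio_bounds:
  fixes T :: real
  assumes T: "0 \<le> T" "T < real k / 2"
    and i: "real k / 2 - T \<le> real i" "real (i + L) \<le> real k / 2 + T"
  defines "r \<equiv> (real k / 2 - T) / (real k / 2 + T)"
  shows "r ^ L * binom_half k i \<le> binom_half k (i + L) \<and> r ^ L * binom_half k (i + L) \<le> binom_half k i"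
  using i(2)
proof (induction L)
  case 0
  then show ?case by simp
next
  case (Suc L)
  have r: "0 \<le> r" "r \<le> 1" using T i by (auto simp: r_def divide_le_eq_1)
  have IH: "r ^ L * binom_half k i \<le> binom_half k (i + L)" "r ^ L * binom_half k (i + L) \<le> binom_half k i"
    using Suc by auto
  have lo: "real k / 2 - T \<le> real (i + L)" and hi: "real (Suc (i + L)) \<le> real k / 2 + T"
    using i Suc.prems by auto
  note step = binom_half_Suc_ratio_bounds[OF T lo hi, folded r_def]
  have "r ^ Suc L * binom_half k i \<le> r * binom_half k (i + L)"
    using mult_left_mono[OF IH(1) r(1)] by (simp add: mult.assoc)
  also have "\<dots> \<le> binom_half k (i + Suc L)" using step(1) by simp
  finally have up: "r ^ Suc L * binom_half k i \<le> binom_half k (i + Suc L)" .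
  have "r ^ Suc L * binom_half k (i + Suc L) \<le> r ^ L * binom_half k (i + L)"
    using mult_left_mono[OF step(2) zero_le_power[OF r(1), of L]] by (simp add: mult.assoc mult.left_commute)
  also have "\<dots> \<le> binom_half k i" by (rule IH(2))
  finally show ?case using up by simp
qed

lemma binom_half_near_center:
  fixes T L :: real
  assumes k: "k > 0" and T: "0 \<le> T" "T < real k / 2"
    and i: "\<bar>real i - real k / 2\<bar> \<le> T" and i': "\<bar>real i' - real k / 2\<bar> \<le> T"
    and L: "\<bar>real i - real i'\<bar> \<le> L"
  shows "(1 - 4 * T * L / real k) * binom_half k i \<le> binom_half k i'"
proof -
  define r where "r = (real k / 2 - T) / (real k / 2 + T)"
  have r: "0 \<le> r" "r \<le> 1" using T by (auto simp: r_def divide_le_eq_1)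
  have "1 - r = 2 * T / (real k / 2 + T)" using T by (simp add: r_def field_simps)
  also have "\<dots> \<le> 2 * T / (real k / 2)" using T by (intro divide_left_mono) auto
  finally have r1: "1 - r \<le> 4 * T / real k" by simp
  define n where "n = (if i \<le> i' then i' - i else i - i')"
  have n: "real n = \<bar>real i - real i'\<bar>" by (simp add: n_def of_nat_diff)
  have chain: "r ^ n * binom_half k i \<le> binom_half k i'"
  proof (cases "i \<le> i'")
    case True
    then show ?thesis using binom_half_ratio_bounds[OF T, of i n] i i' by (simp add: n_def r_def)
  next
    case False
    then show ?thesis using binom_half_ratio_bounds[OF T, of i' n] i i' by (simp add: n_def r_def)
  qed
  have "real n * (1 - r) \<le> L * (4 * T / real k)" using n L r r1 T by (intro mult_mono) auto
  then have "1 - 4 * T * L / real k \<le> 1 - real n * (1 - r)" by (simp add: mult_ac)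
  also have "\<dots> \<le> r ^ n" using Bernoulli_inequality[of "r - 1" n] r by (simp add: algebra_simps)
  finally show ?thesis using chain by (meson mult_right_mono order_trans pmf_nonneg)
qed

lemma binom_half_le_near_center:
  fixes T :: real
  assumes k: "k > 0" and T: "0 < T" "T < real k / 2" "real k \<le> 8 * T\<^sup>2"
    and i: "\<bar>real i - real k / 2\<bar> \<le> T"
  shows "binom_half k i \<le> 16 * T / real k"
proof -
  define M where "M = nat \<lfloor>real k / (8 * T)\<rfloor>"
  have "real M = of_int \<lfloor>real k / (8 * T)\<rfloor>" using T unfolding M_def by simp
  then have M: "real M \<le> real k / (8 * T)" "real k / (8 * T) < real M + 1" by linarith+
  have "real k / (8 * T) \<le> T" using T by (simp add: divide_le_eq power2_eq_square mult.commute)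
  then have MT: "real M \<le> T" using M by simp
  have "4 * T * real M \<le> real k / 2" using mult_left_mono[OF M(1), of "4 * T"] T by simp
  then have half: "1 / 2 \<le> 1 - 4 * T * real M / real k" using k by (simp add: field_simps)
  define S where "S = (if real i \<le> real k / 2 then {i..i + M} else {i - M..i})"
  have "real k / 2 < real i \<Longrightarrow> M \<le> i" using MT T by simp
  then have card: "card S = M + 1" by (auto simp: S_def)
  have "binom_half k i / 2 \<le> binom_half k i'" if "i' \<in> S" for i'
  proof -
    have "\<bar>real i' - real k / 2\<bar> \<le> T" "\<bar>real i - real i'\<bar> \<le> real M"
      using that i MT \<open>real k / 2 < real i \<Longrightarrow> M \<le> i\<close> by (auto simp: S_def split: if_splits)
    then have "(1 - 4 * T * real M / real k) * binom_half k i \<le> binom_half k i'"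
      by (intro binom_half_near_center[OF k less_imp_le[OF T(1)] T(2) i])
    then show ?thesis using mult_right_mono[OF half pmf_nonneg[of "binomial_pmf k (1/2)" i]] by linarith
  qed
  then have "real (M + 1) * (binom_half k i / 2) \<le> sum (binom_half k) S"
    using sum_mono[of S "\<lambda>_. binom_half k i / 2"] card by simp
  also have "\<dots> = measure_pmf.prob (binomial_pmf k (1/2)) S"
    by (simp add: measure_measure_pmf_finite S_def)
  also have "\<dots> \<le> 1" by simp
  finally have "binom_half k i \<le> 2 / (real M + 1)" by (simp add: field_simps)
  also have "\<dots> \<le> 16 * T / real k" using M T k by (simp add: field_simps)
  finally show ?thesis .
qed

section \<open>The conditional entropy in one coordinate\<close>

lemma dyadic_index_line_point:
  "dyadic_index lam t e (line_point x y k i) = \<lfloor>(real k * x t + real i * (y t - x t)) / dyadic_width lam t e\<rfloor>"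
  by (simp add: dyadic_index_def line_point_def)

lemma fine_cell_ratio_arith:
  fixes U s N c b :: real
  assumes "19 \<le> U" "0 \<le> s" "s \<le> 1/10" "1 \<le> N" "N * U - 1 \<le> c" "0 \<le> b"
  shows "(U + 1) * (b / (1 - s)) \<le> (2 / N) * (c * ((1 - s) * b))"
proof -
  have "N * (U - 1) \<le> c" using assms(4,5) by (simp add: algebra_simps)
  then have c: "2 * (U - 1) \<le> (2 / N) * c" using assms(4) by (simp add: field_simps)
  have "(9/10) * (9/10) \<le> (1 - s) * (1 - s)" using assms(3) by (intro mult_mono) auto
  then have "(81/100) * (2 * (U - 1)) \<le> (1 - s) * (1 - s) * (2 * (U - 1))"
    using assms(1) by (intro mult_right_mono) auto
  also have "\<dots> \<le> (1 - s) * (1 - s) * ((2 / N) * c)" using c by (intro mult_left_mono) auto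
  finally have le: "(81/100) * (2 * (U - 1)) \<le> (1 - s) * (1 - s) * ((2 / N) * c)" .
  have "U + 1 \<le> (81/100) * (2 * (U - 1))" using assms(1) by (simp add: algebra_simps)
  from order_trans[OF this le] have "(U + 1) * b \<le> (1 - s) * (1 - s) * ((2 / N) * c) * b"
    using assms(6) by (rule mult_right_mono)
  then show ?thesis using assms(3) by (simp add: field_simps)
qed

(* The atoms P i = k x + i (y - x) of the k-fold convolution carry the weights binom_half k i.
   W and w are the widths in coordinate j of the cells of the coarse level n and of the fine
   level n', L is the number of consecutive atoms in a coarse cell along coordinate j, and the
   indices within T of k/2 form the window on which the binomial weights are spread out. *)
locale coordinate_estimate =
  fixes d j :: nat and lam x y :: "nat \<Rightarrow> real" and k :: nat and n n' :: int and T :: real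
  assumes j: "j \<in> {1..d}" and chi_pos: "\<forall>t\<in>{1..d}. chi lam t > 0"
    and n_le: "n \<le> n'"
    and y_ne_x: "y j \<noteq> x j"
    and k_pos: "k > 0" and T: "0 < T" "T < real k / 2" "real k \<le> 8 * T\<^sup>2"
    and coarse_small: "dyadic_width lam j n / \<bar>y j - x j\<bar> \<le> T / 2"
    and flat: "4 * T * (dyadic_width lam j n / \<bar>y j - x j\<bar>) / real k \<le> 1/10"
    and fine_large: "19 \<le> dyadic_width lam j n' / \<bar>y j - x j\<bar>"
    and others_narrow: "\<forall>t\<in>{1..d}-{j}. 2 * T * \<bar>y t - x t\<bar> < dyadic_width lam t n'"
begin

abbreviation "W \<equiv> dyadic_width lam j n"
abbreviation "w \<equiv> dyadic_width lam j n'"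
abbreviation "L \<equiv> W / \<bar>y j - x j\<bar>"
abbreviation "P \<equiv> line_point x y k"
abbreviation "B \<equiv> binomial_pmf k (1/2)"
abbreviation "cond_part \<equiv> join (dyadic_part d lam n) (preimage_part ({1..d}-{j}) (dyadic_part d lam n'))"

definition typical :: "nat \<Rightarrow> bool" where
  "typical i \<longleftrightarrow> i \<le> k \<and> \<bar>real i - real k / 2\<bar> \<le> T - L \<and>
     (\<forall>t\<in>{1..d}-{j}. \<forall>e\<in>{n, n'}. \<forall>i'\<le>k. \<bar>real i' - real i\<bar> \<le> L \<longrightarrow>
        dyadic_index lam t e (P i') = dyadic_index lam t e (P i))"

definition run :: "nat \<Rightarrow> nat set" where
  "run i = {i'. i' \<le> k \<and> dyadic_index lam j n (P i') = dyadic_index lam j n (P i)}"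

lemma L_pos: "L > 0"
  using y_ne_x dyadic_width_pos[of lam j n] by simp

lemma w_le_W: "w \<le> W"
  using dyadic_width_antimono[of lam j n n'] chi_pos j n_le by auto

lemma run_flatness: "0 \<le> 4 * T * L / real k" "4 * T * L / real k \<le> 1/10"
proof -
  show "0 \<le> 4 * T * L / real k"
    using T dyadic_width_pos[of lam j n] by (intro divide_nonneg_nonneg mult_nonneg_nonneg) auto
  show "4 * T * L / real k \<le> 1/10" by (rule flat)
qed

lemma measure_B_eq_sum: "A \<subseteq> {..k} \<Longrightarrow> measure_pmf.prob B A = sum (binom_half k) A"
  by (rule measure_measure_pmf_finite) (auto intro: finite_subset)

lemma measure_B_restrict: "measure_pmf.prob B A = measure_pmf.prob B (A \<inter> {..k})"
  using measure_Int_set_pmf[of B A] by (simp add: set_pmf_binomial_eq)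

lemma run_interval:
  obtains lo where "\<And>i'. i' \<in> run i \<Longrightarrow> lo \<le> real i' \<and> real i' \<le> lo + L"
    and "\<And>i'. lo < real i' \<Longrightarrow> real i' < lo + L \<Longrightarrow> i' \<le> k \<Longrightarrow> i' \<in> run i"
proof -
  have v: "y j - x j \<noteq> 0" using y_ne_x by simp
  obtain lo where lo: "\<And>r. \<lfloor>(real k * x j + r * (y j - x j)) / W\<rfloor> = dyadic_index lam j n (P i) \<Longrightarrow> lo \<le> r \<and> r \<le> lo + L"
    "\<And>r. lo < r \<Longrightarrow> r < lo + L \<Longrightarrow> \<lfloor>(real k * x j + r * (y j - x j)) / W\<rfloor> = dyadic_index lam j n (P i)"
    by (rule affine_floor_level_interval[OF v dyadic_width_pos[of lam j n], of "real k * x j" "dyadic_index lam j n (P i)"]) blast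
  show thesis
  proof (rule that)
    fix i' assume "i' \<in> run i"
    then show "lo \<le> real i' \<and> real i' \<le> lo + L"
      using lo(1)[of "real i'"] by (simp add: run_def dyadic_index_line_point)
  next
    fix i' assume "lo < real i'" "real i' < lo + L" "i' \<le> k"
    then show "i' \<in> run i" using lo(2)[of "real i'"] by (simp add: run_def dyadic_index_line_point)
  qed
qed

lemma run_close:
  assumes "i \<le> k" and "i' \<in> run i"
  shows "\<bar>real i' - real i\<bar> \<le> L"
proof (rule run_interval[of i])
  fix lo assume lo: "\<And>i'. i' \<in> run i \<Longrightarrow> lo \<le> real i' \<and> real i' \<le> lo + L"
  have "i \<in> run i" using assms(1) by (simp add: run_def)
  then show ?thesis unfolding abs_le_iff using lo[of i] lo[OF assms(2)] by linarith
qed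

lemma finite_run: "finite (run i)"
  by (rule finite_subset[of _ "{..k}"]) (auto simp: run_def)

lemma card_run_ge:
  assumes "typical i"
  shows "L - 1 \<le> real (card (run i))"
proof (rule run_interval[of i])
  fix lo assume lo: "\<And>i'. i' \<in> run i \<Longrightarrow> lo \<le> real i' \<and> real i' \<le> lo + L"
    and inside: "\<And>i'. lo < real i' \<Longrightarrow> real i' < lo + L \<Longrightarrow> i' \<le> k \<Longrightarrow> i' \<in> run i"
  have "i \<in> run i" using assms by (simp add: run_def typical_def)
  then have lo_bounds: "0 \<le> lo" "lo + L \<le> real k"
    using lo[of i] assms T L_pos unfolding typical_def by linarith+
  have "{i'::nat. lo < real i' \<and> real i' < lo + L} \<subseteq> run i"
    using lo_bounds by (auto intro: inside)
  then have "card {i'::nat. lo < real i' \<and> real i' < lo + L} \<le> card (run i)"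
    by (rule card_mono[OF finite_run])
  then show ?thesis using card_open_interval_ge[OF lo_bounds(1), of "lo + L"] by linarith
qed

lemma binom_half_flat_on_run:
  assumes "typical i" and "i' \<in> run i"
  shows "(1 - 4 * T * L / real k) * binom_half k i \<le> binom_half k i'"
    and "(1 - 4 * T * L / real k) * binom_half k i' \<le> binom_half k i"
proof -
  have close: "\<bar>real i' - real i\<bar> \<le> L" using assms by (intro run_close) (auto simp: typical_def)
  then have central: "\<bar>real i - real k / 2\<bar> \<le> T" "\<bar>real i' - real k / 2\<bar> \<le> T"
    using assms(1) L_pos unfolding typical_def by linarith+
  show "(1 - 4 * T * L / real k) * binom_half k i \<le> binom_half k i'"
    using close by (intro binom_half_near_center[OF k_pos less_imp_le[OF T(1)] T(2) central]) auto
  show "(1 - 4 * T * L / real k) * binom_half k i' \<le> binom_half k i"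
    using close by (intro binom_half_near_center[OF k_pos less_imp_le[OF T(1)] T(2) central(2,1)]) auto
qed

lemma run_subset_cell:
  assumes "typical i" and "D \<in> cond_part" and "P i \<in> D" and "i' \<in> run i"
  shows "P i' \<in> D"
proof -
  let ?J = "{1..d}-{j}"
  obtain C E where D: "D = C \<inter> proj ?J -` E" and C: "C \<in> dyadic_part d lam n" and E: "E \<in> dyadic_part d lam n'"
    using assms(2) unfolding join_def preimage_part_def by blast
  have i': "i' \<le> k" "dyadic_index lam j n (P i') = dyadic_index lam j n (P i)"
    using assms(4) by (auto simp: run_def)
  have other: "dyadic_index lam t e (P i') = dyadic_index lam t e (P i)" if "t \<in> ?J" "e \<in> {n, n'}" for t e
    using assms(1) that i' run_close[OF _ assms(4)] unfolding typical_def by blast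
  have "\<forall>t\<in>{1..d}. dyadic_index lam t n (P i') = dyadic_index lam t n (P i)"
    using i'(2) other by (metis DiffI insertI1 singletonD)
  then have "P i' \<in> C" using mem_dyadic_part_iff[OF C] assms(3) D by blast
  moreover have "dyadic_index lam t n' (proj ?J (P i')) = dyadic_index lam t n' (proj ?J (P i))" for t
    using other[of t n'] by (cases "t \<in> ?J") (auto simp: dyadic_index_def proj_def)
  then have "proj ?J (P i') \<in> E" using mem_dyadic_part_iff[OF E] assms(3) D by auto
  ultimately show ?thesis using D by simp
qed

lemma cell_subset_run:
  assumes "D \<in> cond_part" and "P i \<in> D" and "P i' \<in> D" and "i' \<le> k"
  shows "i' \<in> run i"
proof -
  obtain C where C: "C \<in> dyadic_part d lam n" "D \<subseteq> C"
    using assms(1) unfolding join_def by blast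
  then have "\<forall>t\<in>{1..d}. dyadic_index lam t n (P i') = dyadic_index lam t n (P i)"
    using mem_dyadic_part_iff[OF C(1), of "P i" "P i'"] assms(2,3) by blast
  then show ?thesis using assms(4) j by (simp add: run_def)
qed

lemma measure_cell_ge:
  assumes "typical i" and "D \<in> cond_part" and "P i \<in> D"
  shows "real (card (run i)) * ((1 - 4 * T * L / real k) * binom_half k i) \<le> measure_pmf.prob B (P -` D)"
proof -
  have "real (card (run i)) * ((1 - 4 * T * L / real k) * binom_half k i) \<le> sum (binom_half k) (run i)"
    using sum_mono[OF binom_half_flat_on_run(1)[OF assms(1)]] by simp
  also have "\<dots> = measure_pmf.prob B (run i)" by (rule measure_B_eq_sum[symmetric]) (auto simp: run_def)
  also have "\<dots> \<le> measure_pmf.prob B (P -` D)"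
    using run_subset_cell[OF assms] by (intro measure_pmf.finite_measure_mono) auto
  finally show ?thesis .
qed

lemma card_fine_level_le:
  assumes "A \<subseteq> {i. dyadic_index lam j n' (P i) = c}"
  shows "real (card A) \<le> w / \<bar>y j - x j\<bar> + 1"
proof -
  have v: "y j - x j \<noteq> 0" using y_ne_x by simp
  obtain lo where lo: "\<And>r. \<lfloor>(real k * x j + r * (y j - x j)) / w\<rfloor> = c \<Longrightarrow> lo \<le> r \<and> r \<le> lo + w / \<bar>y j - x j\<bar>"
    and "\<And>r. lo < r \<Longrightarrow> r < lo + w / \<bar>y j - x j\<bar> \<Longrightarrow> \<lfloor>(real k * x j + r * (y j - x j)) / w\<rfloor> = c"
    by (rule affine_floor_level_interval[OF v dyadic_width_pos[of lam j n'], of "real k * x j" c]) blast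
  have "A \<subseteq> {i::nat. lo \<le> real i \<and> real i \<le> lo + w / \<bar>y j - x j\<bar>}"
  proof
    fix i assume "i \<in> A"
    then have "\<lfloor>(real k * x j + real i * (y j - x j)) / w\<rfloor> = c"
      using assms by (auto simp: dyadic_index_line_point)
    then show "i \<in> {i::nat. lo \<le> real i \<and> real i \<le> lo + w / \<bar>y j - x j\<bar>}" using lo by simp
  qed
  from card_le_of_subset_interval[OF this] show ?thesis
    using dyadic_width_pos[of lam j n'] by simp
qed

lemma measure_fine_cell_le:
  assumes "typical i" and "D \<in> cond_part" and "P i \<in> D" and C: "C \<in> dyadic_part d lam n'"
  shows "measure_pmf.prob B (P -` (C \<inter> D)) \<le> (w / \<bar>y j - x j\<bar> + 1) * (binom_half k i / (1 - 4 * T * L / real k))"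
proof -
  define s where "s = 4 * T * L / real k"
  have s: "0 \<le> s" "s \<le> 1/10" using run_flatness by (simp_all add: s_def)
  obtain c where c: "C = {v. \<forall>t\<in>{1..d}. dyadic_index lam t n' v = c t}"
    using C unfolding dyadic_part_eq by blast
  define K where "K = {i' \<in> run i. dyadic_index lam j n' (P i') = c j}"
  have sub: "P -` (C \<inter> D) \<inter> {..k} \<subseteq> K"
  proof
    fix i' assume "i' \<in> P -` (C \<inter> D) \<inter> {..k}"
    then have "P i' \<in> C" "P i' \<in> D" "i' \<le> k" by auto
    then have "i' \<in> run i" "dyadic_index lam j n' (P i') = c j"
      using cell_subset_run[OF assms(2,3)] j c by auto
    then show "i' \<in> K" by (simp add: K_def)
  qed
  have card_K: "real (card K) \<le> w / \<bar>y j - x j\<bar> + 1"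
    by (rule card_fine_level_le) (auto simp: K_def)
  have "measure_pmf.prob B (P -` (C \<inter> D)) \<le> measure_pmf.prob B K"
    using measure_pmf.finite_measure_mono[OF sub] measure_B_restrict[of "P -` (C \<inter> D)"] by simp
  also have "\<dots> = sum (binom_half k) K" by (rule measure_B_eq_sum) (auto simp: K_def run_def)
  also have "\<dots> \<le> sum (\<lambda>_. binom_half k i / (1 - s)) K"
  proof (rule sum_mono)
    fix i' assume "i' \<in> K"
    then have "(1 - s) * binom_half k i' \<le> binom_half k i"
      unfolding s_def by (intro binom_half_flat_on_run(2)[OF assms(1)]) (simp add: K_def)
    then show "binom_half k i' \<le> binom_half k i / (1 - s)" using s by (simp add: field_simps)
  qed
  also have "\<dots> \<le> (w / \<bar>y j - x j\<bar> + 1) * (binom_half k i / (1 - s))"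
    using mult_right_mono[OF card_K, of "binom_half k i / (1 - s)"] s by simp
  finally show ?thesis unfolding s_def .
qed

(* A typical atom sees in its conditioning cell its whole run of about L atoms of almost equal
   weight, while a fine cell contains at most w / |y_j - x_j| + 1 of them. *)
lemma measure_fine_cell_le_ratio:
  assumes "typical i" and "D \<in> cond_part" and "P i \<in> D" and "C \<in> dyadic_part d lam n'"
  shows "measure_pmf.prob B (P -` (C \<inter> D)) \<le> (2 * w / W) * measure_pmf.prob B (P -` D)"
proof -
  have "W / w * (w / \<bar>y j - x j\<bar>) - 1 \<le> real (card (run i))"
    using card_run_ge[OF assms(1)] dyadic_width_pos[of lam j n'] by simp
  then have "(w / \<bar>y j - x j\<bar> + 1) * (binom_half k i / (1 - 4 * T * L / real k))
      \<le> (2 / (W / w)) * (real (card (run i)) * ((1 - 4 * T * L / real k) * binom_half k i))"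
    using fine_large run_flatness w_le_W dyadic_width_pos[of lam j n'] by (intro fine_cell_ratio_arith) auto
  also have "\<dots> \<le> (2 / (W / w)) * measure_pmf.prob B (P -` D)"
    using measure_cell_ge[OF assms(1-3)] dyadic_width_pos[of lam j n'] dyadic_width_pos[of lam j n]
    by (intro mult_left_mono) auto
  finally show ?thesis using measure_fine_cell_le[OF assms] by simp
qed

definition jumps :: "nat \<Rightarrow> int \<Rightarrow> nat set" where
  "jumps t e = {i. i \<le> k \<and> \<bar>real i - real k / 2\<bar> \<le> T \<and>
     (\<exists>i'\<le>k. \<bar>real i' - real k / 2\<bar> \<le> T \<and> \<bar>real i' - real i\<bar> \<le> L \<and>
        dyadic_index lam t e (P i') \<noteq> dyadic_index lam t e (P i))}"

lemma central_span_lt_1: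
  assumes t: "t \<in> {1..d}-{j}" and e: "e \<in> {n, n'}"
    and "\<bar>p - real k / 2\<bar> \<le> T" "\<bar>q - real k / 2\<bar> \<le> T"
  shows "\<bar>p - q\<bar> * \<bar>y t - x t\<bar> / dyadic_width lam t e < 1"
proof -
  have "dyadic_width lam t n' \<le> dyadic_width lam t e"
    using e dyadic_width_antimono[of lam t n n'] chi_pos t n_le by auto
  moreover have "2 * T * \<bar>y t - x t\<bar> < dyadic_width lam t n'" using others_narrow t by blast
  ultimately have "2 * T * \<bar>y t - x t\<bar> < dyadic_width lam t e" by linarith
  moreover have "\<bar>p - q\<bar> * \<bar>y t - x t\<bar> \<le> 2 * T * \<bar>y t - x t\<bar>"
    using assms(3,4) by (intro mult_right_mono) auto
  ultimately show ?thesis using dyadic_width_pos[of lam t e] by simp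
qed

(* The central atoms span less than one cell in coordinate t, so all changes of the cell
   happen across one boundary, and only the atoms within distance L of it are jumps. *)
lemma card_jumps_le:
  assumes t: "t \<in> {1..d}-{j}" and e: "e \<in> {n, n'}"
  shows "real (card (jumps t e)) \<le> 2 * L + 1"
proof (cases "jumps t e = {}")
  case False
  define s where "s = dyadic_width lam t e"
  define b where "b = (y t - x t) / s"
  define X where "X r = real k * x t / s + r * b" for r
  have s: "s > 0" by (simp add: s_def dyadic_width_pos)
  have index: "dyadic_index lam t e (P i) = \<lfloor>X (real i)\<rfloor>" for i
    by (simp add: dyadic_index_line_point X_def b_def s_def add_divide_distrib)
  have X_diff: "X p - X q = (p - q) * b" for p q by (simp add: X_def algebra_simps)
  have X_close: "\<bar>X p - X q\<bar> < 1" if "\<bar>p - real k / 2\<bar> \<le> T" "\<bar>q - real k / 2\<bar> \<le> T" for p q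
    using central_span_lt_1[OF t e that] s by (simp add: X_diff b_def s_def abs_mult)
  obtain i0 i0' where i0: "\<bar>real i0 - real k / 2\<bar> \<le> T" "\<bar>real i0' - real k / 2\<bar> \<le> T"
    "\<lfloor>X (real i0')\<rfloor> \<noteq> \<lfloor>X (real i0)\<rfloor>"
    using False unfolding jumps_def index by blast
  then have b: "b \<noteq> 0" by (auto simp: X_def)
  define z where "z = max \<lfloor>X (real i0')\<rfloor> \<lfloor>X (real i0)\<rfloor>"
  have "jumps t e \<subseteq> {i. \<bar>X 0 + real i * b - real_of_int z\<bar> \<le> L * \<bar>b\<bar>}"
  proof
    fix i assume "i \<in> jumps t e"
    then obtain i' where i: "\<bar>real i - real k / 2\<bar> \<le> T" "\<bar>real i' - real k / 2\<bar> \<le> T"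
      "\<bar>real i' - real i\<bar> \<le> L" "\<lfloor>X (real i')\<rfloor> \<noteq> \<lfloor>X (real i)\<rfloor>"
      unfolding jumps_def index by blast
    have "z = max \<lfloor>X (real i')\<rfloor> \<lfloor>X (real i)\<rfloor>"
      unfolding z_def by (rule floor_neq_common_jump[OF i0(3) i(4)]) (intro X_close; fact)+
    then have "\<bar>X (real i) - real_of_int z\<bar> \<le> \<bar>X (real i) - X (real i')\<bar>"
      using floor_neq_imp_between[OF i(4)] by (auto simp: min_def max_def split: if_splits)
    also have "\<dots> = \<bar>real i' - real i\<bar> * \<bar>b\<bar>" by (simp add: X_diff abs_mult abs_minus_commute)
    also have "\<dots> \<le> L * \<bar>b\<bar>" by (rule mult_right_mono[OF i(3) abs_ge_zero])
    finally show "i \<in> {i. \<bar>X 0 + real i * b - real_of_int z\<bar> \<le> L * \<bar>b\<bar>}" by (simp add: X_def)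
  qed
  moreover have "0 \<le> L * \<bar>b\<bar>" using mult_nonneg_nonneg[OF less_imp_le[OF L_pos] abs_ge_zero] .
  ultimately have "real (card (jumps t e)) \<le> 2 * (L * \<bar>b\<bar>) / \<bar>b\<bar> + 1"
    using card_le_of_subset_affine_near[OF b] by blast
  then show ?thesis using b by simp
qed (use L_pos in simp)

lemma measure_jumps_le:
  assumes "t \<in> {1..d}-{j}" and "e \<in> {n, n'}"
  shows "measure_pmf.prob B (jumps t e) \<le> (2 * L + 1) * (16 * T / real k)"
proof -
  have "measure_pmf.prob B (jumps t e) = sum (binom_half k) (jumps t e)"
    by (rule measure_B_eq_sum) (auto simp: jumps_def)
  also have "\<dots> \<le> real (card (jumps t e)) * (16 * T / real k)"
    using sum_bounded_above[of "jumps t e" "binom_half k" "16 * T / real k"]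
      binom_half_le_near_center[OF k_pos T] by (auto simp: jumps_def)
  also have "\<dots> \<le> (2 * L + 1) * (16 * T / real k)"
    using card_jumps_le[OF assms] T by (intro mult_right_mono) auto
  finally show ?thesis .
qed

lemma not_typical_subset:
  "{i. \<not> typical i} \<inter> {..k} \<subseteq>
     {i. T / 2 \<le> \<bar>real i - real k * (1/2)\<bar>} \<union> (\<Union>p\<in>({1..d}-{j}) \<times> {n, n'}. jumps (fst p) (snd p))"
proof
  fix i assume i: "i \<in> {i. \<not> typical i} \<inter> {..k}"
  show "i \<in> {i. T / 2 \<le> \<bar>real i - real k * (1/2)\<bar>} \<union> (\<Union>p\<in>({1..d}-{j}) \<times> {n, n'}. jumps (fst p) (snd p))"
  proof (cases "\<bar>real i - real k / 2\<bar> \<le> T - L")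
    case False
    then have "T / 2 \<le> \<bar>real i - real k * (1/2)\<bar>" using coarse_small by simp
    then show ?thesis by blast
  next
    case True
    then have "\<not> (\<forall>t\<in>{1..d}-{j}. \<forall>e\<in>{n, n'}. \<forall>i'\<le>k. \<bar>real i' - real i\<bar> \<le> L \<longrightarrow>
        dyadic_index lam t e (P i') = dyadic_index lam t e (P i))"
      using i unfolding typical_def by simp
    then obtain t e i' where te: "t \<in> {1..d}-{j}" "e \<in> {n, n'}" and i': "i' \<le> k" "\<bar>real i' - real i\<bar> \<le> L"
      "dyadic_index lam t e (P i') \<noteq> dyadic_index lam t e (P i)"
      by blast
    have "\<bar>real i - real k / 2\<bar> \<le> T" "\<bar>real i' - real k / 2\<bar> \<le> T" using True i'(2) L_pos by linarith+
    then have "i \<in> jumps t e" using i i' unfolding jumps_def by blast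
    moreover have "(t, e) \<in> ({1..d}-{j}) \<times> {n, n'}" using te by simp
    ultimately show ?thesis by (intro UnI2 UN_I[of "(t, e)"]) simp_all
  qed
qed

lemma measure_not_typical_le:
  "measure_pmf.prob B {i. \<not> typical i}
     \<le> 2 * exp (- 2 * (T/2)\<^sup>2 / real k) + 2 * real (d - 1) * ((2 * L + 1) * (16 * T / real k))"
proof -
  let ?I = "({1..d}-{j}) \<times> {n, n'}"
  let ?tail = "{i. T / 2 \<le> \<bar>real i - real k * (1/2)\<bar>}"
  let ?J = "\<Union>p\<in>?I. jumps (fst p) (snd p)"
  have "card {n, n'} \<le> 2" by (simp add: card_insert_if)
  then have "card ?I \<le> (d - 1) * 2" using j by (simp add: card_cartesian_product)
  then have card_I: "real (card ?I) \<le> 2 * real (d - 1)"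
    by (metis of_nat_le_iff of_nat_mult mult.commute of_nat_numeral)
  have tail: "measure_pmf.prob B ?tail \<le> 2 * exp (- 2 * (T/2)\<^sup>2 / real k)"
  proof -
    interpret binomial_distribution k "1/2" by unfold_locales simp
    show ?thesis using prob_abs_ge[of "T/2"] k_pos T by simp
  qed
  have "measure_pmf.prob B ?J \<le> (\<Sum>p\<in>?I. measure_pmf.prob B (jumps (fst p) (snd p)))"
    by (rule measure_pmf.finite_measure_subadditive_finite) auto
  also have "\<dots> \<le> (\<Sum>p\<in>?I. (2 * L + 1) * (16 * T / real k))"
  proof (rule sum_mono)
    fix p assume "p \<in> ?I"
    then show "measure_pmf.prob B (jumps (fst p) (snd p)) \<le> (2 * L + 1) * (16 * T / real k)"
      by (intro measure_jumps_le) auto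
  qed
  also have "\<dots> = real (card ?I) * ((2 * L + 1) * (16 * T / real k))" by simp
  also have "\<dots> \<le> 2 * real (d - 1) * ((2 * L + 1) * (16 * T / real k))"
    by (rule mult_right_mono[OF card_I]) (use L_pos T in simp)
  finally have jumps: "measure_pmf.prob B ?J \<le> 2 * real (d - 1) * ((2 * L + 1) * (16 * T / real k))" .
  have "measure_pmf.prob B {i. \<not> typical i} \<le> measure_pmf.prob B (?tail \<union> ?J)"
    using measure_pmf.finite_measure_mono[OF not_typical_subset] measure_B_restrict[of "{i. \<not> typical i}"]
    by simp
  also have "\<dots> \<le> measure_pmf.prob B ?tail + measure_pmf.prob B ?J"
    by (rule measure_Un_le) auto
  finally show ?thesis using tail jumps by linarith
qed

lemma neg_log_fine_ratio:
  "- log 2 (2 * w / W) = real_of_int (\<lfloor>chi lam j * real_of_int n'\<rfloor> - \<lfloor>chi lam j * real_of_int n\<rfloor>) - 1"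
proof -
  have "w / W = 2 powr (real_of_int (\<lfloor>chi lam j * real_of_int n\<rfloor> - \<lfloor>chi lam j * real_of_int n'\<rfloor>))"
    unfolding dyadic_width_def by (simp add: powr_diff[symmetric])
  then have "2 * w / W = 2 powr (1 + real_of_int (\<lfloor>chi lam j * real_of_int n\<rfloor> - \<lfloor>chi lam j * real_of_int n'\<rfloor>))"
    by (simp add: powr_add)
  then show ?thesis by simp
qed

lemma entropy_cond_cell_ge:
  assumes "typical i" and "D \<in> cond_part" and "P i \<in> D"
  shows "- log 2 (2 * w / W) \<le> entropy_part (cond_pmf (map_pmf P B) D) (dyadic_part d lam n')"
proof (rule entropy_part_ge_neg_log)
  let ?\<mu> = "map_pmf P B"
  have fin: "finite (set_pmf ?\<mu>)" by (simp add: set_pmf_binomial_eq)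
  have i: "P i \<in> set_pmf ?\<mu>" using assms(1) by (auto simp: typical_def set_pmf_binomial_eq)
  then have ne: "set_pmf ?\<mu> \<inter> D \<noteq> {}" using assms(3) by auto
  show "finite (set_pmf (cond_pmf ?\<mu> D))" using fin ne by (simp add: set_cond_pmf)
  show "disjoint (dyadic_part d lam n')" by (rule disjoint_dyadic_part)
  show "\<Union>(dyadic_part d lam n') = UNIV" by (rule Union_dyadic_part)
  show "0 < 2 * w / W" by (simp add: dyadic_width_pos)
  fix C assume "C \<in> dyadic_part d lam n'"
  then have "measure_pmf.prob ?\<mu> (C \<inter> D) \<le> (2 * w / W) * measure_pmf.prob ?\<mu> D"
    using measure_fine_cell_le_ratio[OF assms] by simp
  then show "measure_pmf.prob (cond_pmf ?\<mu> D) C \<le> 2 * w / W"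
    using measure_pmf_posI[OF i assms(3)] by (simp add: measure_cond_pmf[OF fin ne] pos_divide_le_eq)
qed

lemma cond_entropy_ge:
  assumes h: "h = real_of_int (\<lfloor>chi lam j * real_of_int n'\<rfloor> - \<lfloor>chi lam j * real_of_int n\<rfloor>) - 1" "h \<ge> 0"
  shows "h * (1 - (2 * exp (- 2 * (T/2)\<^sup>2 / real k) + 2 * real (d - 1) * ((2 * L + 1) * (16 * T / real k))))
    \<le> cond_entropy_part (conv_pow (pmf_of_set {x, y}) k) (dyadic_part d lam n') cond_part"
proof -
  let ?\<mu> = "map_pmf P B"
  have \<mu>: "conv_pow (pmf_of_set {x, y}) k = ?\<mu>"
    using y_ne_x by (intro conv_pow_pmf_of_set_two) auto
  have "1 - measure_pmf.prob B {i. \<not> typical i} = measure_pmf.prob B {i. typical i}"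
    using measure_pmf.prob_compl[of "{i. \<not> typical i}" B] by (simp add: Compl_eq_Diff_UNIV[symmetric] Collect_neg_eq[symmetric])
  also have "\<dots> \<le> measure_pmf.prob ?\<mu> (P ` {i. typical i})"
    by (simp, intro measure_pmf.finite_measure_mono) auto
  finally have "1 - (2 * exp (- 2 * (T/2)\<^sup>2 / real k) + 2 * real (d - 1) * ((2 * L + 1) * (16 * T / real k)))
      \<le> measure_pmf.prob ?\<mu> (P ` {i. typical i})"
    using measure_not_typical_le by linarith
  then have "h * (1 - (2 * exp (- 2 * (T/2)\<^sup>2 / real k) + 2 * real (d - 1) * ((2 * L + 1) * (16 * T / real k))))
      \<le> h * measure_pmf.prob ?\<mu> (P ` {i. typical i})"
    using h(2) by (rule mult_left_mono)
  also have "\<dots> \<le> cond_entropy_part ?\<mu> (dyadic_part d lam n') cond_part"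
  proof (rule cond_entropy_part_ge)
    show "finite (set_pmf ?\<mu>)" by (simp add: set_pmf_binomial_eq)
    show "disjoint cond_part" by (intro disjoint_join disjoint_preimage_part disjoint_dyadic_part)
    fix z assume "z \<in> P ` {i. typical i}"
    then obtain i where i: "typical i" "z = P i" by auto
    obtain D where "D \<in> cond_part" "z \<in> D"
      using Union_join[OF Union_dyadic_part Union_preimage_part[OF Union_dyadic_part]] by blast
    then show "\<exists>D\<in>cond_part. z \<in> D \<and> h \<le> entropy_part (cond_pmf ?\<mu> D) (dyadic_part d lam n')"
      using entropy_cond_cell_ge[OF i(1)] i(2) neg_log_fine_ratio h(1) by auto
  qed (use h in simp)
  finally show ?thesis using \<mu> by simp
qed

end

lemma two_powr_log_mult: "x > 0 \<Longrightarrow> 2 powr (log 2 x * c) = x powr c"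
  by (simp add: powr_powr[symmetric])

lemma dyadic_width_shift_le:
  fixes l k :: nat
  assumes "chi lam j > 0" and "k > 0"
  shows "dyadic_width lam j (int l - \<lfloor>log 2 (real k) / (2 * chi lam j)\<rfloor>)
    \<le> 2 powr (1 - chi lam j * real l) * sqrt (real k)"
proof -
  define c where "c = chi lam j"
  define a where "a = \<lfloor>log 2 (real k) / (2 * c)\<rfloor>"
  have "c * real_of_int a \<le> c * (log 2 (real k) / (2 * c))"
    using assms(1) unfolding a_def c_def by (intro mult_left_mono) auto
  then have "- real_of_int \<lfloor>c * real_of_int (int l - a)\<rfloor> \<le> (1 - c * real l) + log 2 (real k) * (1/2)"
    using assms(1) unfolding c_def by (simp add: algebra_simps) linarith
  then have "dyadic_width lam j (int l - a) \<le> 2 powr ((1 - c * real l) + log 2 (real k) * (1/2))"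
    unfolding dyadic_width_def c_def by simp
  also have "\<dots> = 2 powr (1 - c * real l) * 2 powr (log 2 (real k) * (1/2))" by (rule powr_add)
  also have "2 powr (log 2 (real k) * (1/2)) = sqrt (real k)"
    using two_powr_log_mult[of "real k" "1/2"] assms(2) by (simp add: powr_half_sqrt)
  finally show ?thesis unfolding a_def c_def .
qed

lemma dyadic_width_shift_ge:
  fixes l m k :: nat
  assumes "chi lam t > 0" and "chi lam j > 0" and "k > 0"
  shows "2 powr (- chi lam t * (real l + real m + 1)) * real k powr (chi lam t / (2 * chi lam j))
    \<le> dyadic_width lam t (int l - \<lfloor>log 2 (real k) / (2 * chi lam j)\<rfloor> + int m)"
proof -
  define c where "c = chi lam t"
  define a where "a = \<lfloor>log 2 (real k) / (2 * chi lam j)\<rfloor>"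
  have "c * (log 2 (real k) / (2 * chi lam j) - 1) \<le> c * real_of_int a"
    using assms(1) unfolding a_def c_def by (intro mult_left_mono) linarith+
  then have "- c * (real l + real m + 1) + log 2 (real k) * (c / (2 * chi lam j))
      \<le> - real_of_int \<lfloor>c * real_of_int (int l - a + int m)\<rfloor>"
    by (simp add: algebra_simps) linarith
  then have "2 powr (- c * (real l + real m + 1) + log 2 (real k) * (c / (2 * chi lam j)))
      \<le> dyadic_width lam t (int l - a + int m)"
    unfolding dyadic_width_def c_def by simp
  moreover have "2 powr (- c * (real l + real m + 1) + log 2 (real k) * (c / (2 * chi lam j)))
      = 2 powr (- c * (real l + real m + 1)) * real k powr (c / (2 * chi lam j))"
    using assms(3) by (simp only: powr_add two_powr_log_mult of_nat_0_less_iff)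
  ultimately show ?thesis unfolding a_def c_def by simp
qed

lemma two_exp_tail_le:
  fixes \<beta> :: real
  assumes "\<beta> > 0"
  shows "2 * exp (- (sqrt (12 / \<beta>) + 1)\<^sup>2 / 2) \<le> \<beta> / 3"
proof -
  define R where "R = sqrt (12 / \<beta>) + 1"
  have "0 \<le> sqrt (12 / \<beta>)" using assms by simp
  then have "R > 0" unfolding R_def by linarith
  moreover have "12 / \<beta> \<le> R\<^sup>2"
    using assms real_sqrt_pow2[of "12 / \<beta>"] power_mono[of "sqrt (12 / \<beta>)" R 2] by (auto simp: R_def)
  ultimately have R: "R > 0" "12 / \<beta> \<le> R\<^sup>2" .
  have "R\<^sup>2 / 2 \<le> exp (R\<^sup>2 / 2)" using exp_ge_add_one_self[of "R\<^sup>2 / 2"] by linarith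
  then have "2 * exp (- R\<^sup>2 / 2) \<le> 2 / (R\<^sup>2 / 2)"
    using R by (simp add: exp_minus field_simps)
  also have "\<dots> \<le> 2 / (6 / \<beta>)" using R assms by (intro divide_left_mono) auto
  finally show ?thesis by (simp add: R_def)
qed

locale scale_choice =
  fixes d j :: nat and lam x y :: "nat \<Rightarrow> real" and eps R \<delta> :: real and m l k :: nat
  assumes j: "j \<in> {1..d}" and chi_pos: "\<forall>t\<in>{1..d}. chi lam t > 0"
    and eps: "0 < eps"
    and R: "R \<ge> 1" and R_tail: "2 * exp (- R\<^sup>2 / 2) \<le> eps / (2 * chi lam j) / 3"
    and \<delta>: "\<delta> > 0" "\<delta> \<le> \<bar>y j - x j\<bar>" "\<bar>y j - x j\<bar> \<le> 1 / eps"
    and m: "real m > 4 / eps" "chi lam j * real m \<ge> 2"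
    and l: "2 powr (1 - chi lam j * real l) \<le> \<delta> / 2"
      "2 powr (1 - chi lam j * real l) \<le> \<delta> / (40 * R)"
      "2 powr (1 - chi lam j * real l) \<le> (eps / (2 * chi lam j)) * \<delta> / (192 * real d * R)"
    and k: "k \<ge> 1" "2 * R < sqrt (real k)"
      "19 \<le> 2 powr (- chi lam j * (real l + real m + 1)) * sqrt (real k) * eps"
      "32 * real d * R / sqrt (real k) \<le> (eps / (2 * chi lam j)) / 3"
    and others: "\<forall>t\<in>{1..d}-{j}. 2 * (R * sqrt (real k)) * \<bar>y t - x t\<bar>
        < 2 powr (- chi lam t * (real l + real m + 1)) * real k powr (chi lam t / (2 * chi lam j))"
begin

abbreviation "a \<equiv> \<lfloor>log 2 (real k) / (2 * chi lam j)\<rfloor>"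
abbreviation "q \<equiv> 2 powr (1 - chi lam j * real l)"

lemma chi_j_pos: "chi lam j > 0" using chi_pos j by auto

lemma k_pos: "k > 0" using k(1) by simp

lemma sqrt_k_pos: "sqrt (real k) > 0" using k(1) by simp

lemma coarse_run_le:
  "dyadic_width lam j (int l - a) / \<bar>y j - x j\<bar> \<le> q * sqrt (real k) / \<delta>"
proof -
  have "dyadic_width lam j (int l - a) / \<bar>y j - x j\<bar> \<le> dyadic_width lam j (int l - a) / \<delta>"
    using \<delta> dyadic_width_pos[of lam j "int l - a"] by (intro divide_left_mono) auto
  also have "\<dots> \<le> q * sqrt (real k) / \<delta>"
    using dyadic_width_shift_le[OF chi_j_pos, of k l] k(1) \<delta>(1) by (intro divide_right_mono) auto
  finally show ?thesis .
qed

lemma coarse_run_le_half: "dyadic_width lam j (int l - a) / \<bar>y j - x j\<bar> \<le> R * sqrt (real k) / 2"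
proof -
  have "q * sqrt (real k) / \<delta> \<le> (\<delta> / 2) * sqrt (real k) / \<delta>"
    using l(1) \<delta> sqrt_k_pos by (intro divide_right_mono mult_right_mono) auto
  also have "\<dots> \<le> R * sqrt (real k) / 2" using \<delta> R sqrt_k_pos by simp
  finally show ?thesis using coarse_run_le by linarith
qed

lemma coarse_run_flat:
  "4 * (R * sqrt (real k)) * (dyadic_width lam j (int l - a) / \<bar>y j - x j\<bar>) / real k \<le> 1 / 10"
proof -
  have "4 * (R * sqrt (real k)) * (dyadic_width lam j (int l - a) / \<bar>y j - x j\<bar>) / real k
      \<le> 4 * (R * sqrt (real k)) * (q * sqrt (real k) / \<delta>) / real k"
    using coarse_run_le R sqrt_k_pos k(1) by (intro divide_right_mono mult_left_mono) auto
  also have "\<dots> = 4 * R * q / \<delta>" using sqrt_k_pos k(1) \<delta> by (simp add: field_simps)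
  also have "\<dots> \<le> 4 * R * (\<delta> / (40 * R)) / \<delta>" using l(2) R \<delta> by (intro divide_right_mono mult_left_mono) auto
  also have "\<dots> = 1 / 10" using R \<delta> by simp
  finally show ?thesis .
qed

lemma fine_run_ge: "19 \<le> dyadic_width lam j (int l - a + int m) / \<bar>y j - x j\<bar>"
proof -
  have "2 powr (- chi lam j * (real l + real m + 1)) * sqrt (real k) \<le> dyadic_width lam j (int l - a + int m)"
    using dyadic_width_shift_ge[OF chi_j_pos chi_j_pos k_pos, of l m] chi_j_pos by (simp add: powr_half_sqrt)
  then have "19 \<le> dyadic_width lam j (int l - a + int m) * eps"
    using k(3) eps by (meson mult_right_mono less_imp_le order_trans)
  also have "\<dots> \<le> dyadic_width lam j (int l - a + int m) / \<bar>y j - x j\<bar>"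
  proof -
    have v: "0 < \<bar>y j - x j\<bar>" "eps * \<bar>y j - x j\<bar> \<le> 1" using \<delta> eps by (auto simp: field_simps)
    then have "dyadic_width lam j (int l - a + int m) * (eps * \<bar>y j - x j\<bar>) \<le> dyadic_width lam j (int l - a + int m)"
      using dyadic_width_pos[of lam j "int l - a + int m"] by (intro mult_left_le) auto
    then show ?thesis using v by (simp add: le_divide_eq mult.assoc)
  qed
  finally show ?thesis .
qed

lemma others_narrow_shifted:
  assumes "t \<in> {1..d}-{j}"
  shows "2 * (R * sqrt (real k)) * \<bar>y t - x t\<bar> < dyadic_width lam t (int l - a + int m)"
proof -
  have "chi lam t > 0" using chi_pos assms by auto
  from dyadic_width_shift_ge[OF this chi_j_pos k_pos, of l m] show ?thesis
    using others assms by (meson order_less_le_trans)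
qed

lemma shifted_coordinate_estimate:
  "coordinate_estimate d j lam x y k (int l - a) (int l - a + int m) (R * sqrt (real k))"
proof
  show "j \<in> {1..d}" "\<forall>t\<in>{1..d}. 0 < chi lam t" "int l - a \<le> int l - a + int m" "0 < k"
    using j chi_pos k_pos by auto
  show "y j \<noteq> x j" "0 < R * sqrt (real k)" using \<delta> R sqrt_k_pos by auto
  show "R * sqrt (real k) < real k / 2"
    using k(2) mult_strict_right_mono[OF k(2) sqrt_k_pos] by (simp add: algebra_simps)
  have "1 \<le> R\<^sup>2" using R by (rule one_le_power)
  then have "real k * 1 \<le> real k * (8 * R\<^sup>2)" by (intro mult_left_mono) auto
  then show "real k \<le> 8 * (R * sqrt (real k))\<^sup>2" by (simp add: power_mult_distrib algebra_simps)
qed (use coarse_run_le_half coarse_run_flat fine_run_ge others_narrow_shifted in auto)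

lemma not_typical_bound_le:
  "2 * exp (- 2 * (R * sqrt (real k) / 2)\<^sup>2 / real k) + 2 * real (d - 1) *
     ((2 * (dyadic_width lam j (int l - a) / \<bar>y j - x j\<bar>) + 1) * (16 * (R * sqrt (real k)) / real k))
   \<le> eps / (2 * chi lam j)"
proof -
  define s where "s = sqrt (real k)"
  have s: "s > 0" and k_eq: "real k = s * s" using sqrt_k_pos by (simp_all add: s_def)
  have e: "- 2 * (R * s / 2)\<^sup>2 / real k = - R\<^sup>2 / 2"
    using s unfolding k_eq by (simp add: field_simps power2_eq_square)
  have tail: "2 * exp (- 2 * (R * s / 2)\<^sup>2 / real k) \<le> eps / (2 * chi lam j) / 3"
    unfolding e by (rule R_tail)
  define X where "X = (2 * (dyadic_width lam j (int l - a) / \<bar>y j - x j\<bar>) + 1) * (16 * (R * s) / real k)"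
  have "0 \<le> X" unfolding X_def using R s dyadic_width_pos[of lam j "int l - a"]
    by (intro mult_nonneg_nonneg add_nonneg_nonneg) auto
  have "X \<le> (2 * (q * s / \<delta>) + 1) * (16 * (R * s) / real k)"
    unfolding X_def using coarse_run_le R s unfolding s_def[symmetric] by (intro mult_right_mono) auto
  have "2 * real (d - 1) * X \<le> 2 * real d * X" using \<open>0 \<le> X\<close> by (intro mult_right_mono) auto
  also have "\<dots> \<le> 2 * real d * ((2 * (q * s / \<delta>) + 1) * (16 * (R * s) / real k))"
    using \<open>X \<le> _\<close> by (intro mult_left_mono) auto
  also have "\<dots> = 64 * real d * R * q / \<delta> + 32 * real d * R / s"
    using s \<delta>(1) unfolding k_eq by (simp add: field_simps)
  finally have X_le: "2 * real (d - 1) * X \<le> 64 * real d * R * q / \<delta> + 32 * real d * R / s" .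
  have "64 * real d * R * q / \<delta> \<le> 64 * real d * R * ((eps / (2 * chi lam j)) * \<delta> / (192 * real d * R)) / \<delta>"
    using l(3) R \<delta> by (intro divide_right_mono mult_left_mono) auto
  also have "\<dots> = eps / (2 * chi lam j) / 3" using R \<delta> j by (simp add: field_simps)
  finally have q_le: "64 * real d * R * q / \<delta> \<le> eps / (2 * chi lam j) / 3" .
  have "2 * real (d - 1) * X \<le> eps / (2 * chi lam j) / 3 + eps / (2 * chi lam j) / 3"
    using order_trans[OF X_le[unfolded s_def] add_mono[OF q_le k(4)]] .
  with tail have "2 * exp (- 2 * (R * s / 2)\<^sup>2 / real k) + 2 * real (d - 1) * X
      \<le> eps / (2 * chi lam j) / 3 + (eps / (2 * chi lam j) / 3 + eps / (2 * chi lam j) / 3)"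
    by (rule add_mono)
  then show ?thesis unfolding X_def s_def by simp
qed

lemma cond_entropy_shifted_ge:
  "chi lam j * real m - 2 - eps * real m / 2 \<le> cond_entropy_part (conv_pow (pmf_of_set {x, y}) k)
      (dyadic_part d lam (int l - a + int m))
      (join (dyadic_part d lam (int l - a)) (preimage_part ({1..d}-{j}) (dyadic_part d lam (int l - a + int m))))"
proof -
  interpret coordinate_estimate d j lam x y k "int l - a" "int l - a + int m" "R * sqrt (real k)"
    by (rule shifted_coordinate_estimate)
  define h where "h = real_of_int (\<lfloor>chi lam j * real_of_int (int l - a + int m)\<rfloor> - \<lfloor>chi lam j * real_of_int (int l - a)\<rfloor>) - 1"
  define bad where "bad = 2 * exp (- 2 * (R * sqrt (real k) / 2)\<^sup>2 / real k) + 2 * real (d - 1) *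
     ((2 * (dyadic_width lam j (int l - a) / \<bar>y j - x j\<bar>) + 1) * (16 * (R * sqrt (real k)) / real k))"
  have h: "chi lam j * real m - 2 \<le> h"
    unfolding h_def by (simp add: algebra_simps) linarith
  have bad: "0 \<le> bad" "bad \<le> eps / (2 * chi lam j)"
    using not_typical_bound_le R sqrt_k_pos dyadic_width_pos[of lam j "int l - a"] unfolding bad_def
    by (auto intro!: add_nonneg_nonneg mult_nonneg_nonneg)
  show ?thesis
  proof (cases "bad \<le> 1")
    case True
    have "(chi lam j * real m - 2) * (1 - bad) \<le> h * (1 - bad)" using h True by (intro mult_right_mono) auto
    also have "\<dots> \<le> cond_entropy_part (conv_pow (pmf_of_set {x, y}) k) (dyadic_part d lam (int l - a + int m)) cond_part"
      using cond_entropy_ge[OF h_def] h m(2) unfolding bad_def by simp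
    moreover have "chi lam j * real m - 2 - bad * (chi lam j * real m) \<le> (chi lam j * real m - 2) * (1 - bad)"
      using bad(1) by (simp add: algebra_simps)
    moreover have "bad * (chi lam j * real m) \<le> eps / (2 * chi lam j) * (chi lam j * real m)"
      using bad(2) chi_j_pos by (intro mult_right_mono) auto
    moreover have "eps / (2 * chi lam j) * (chi lam j * real m) = eps * real m / 2" using chi_j_pos by simp
    ultimately show ?thesis by linarith
  next
    case False
    then have "1 < eps / (2 * chi lam j)" using bad(2) by linarith
    then have "chi lam j * real m \<le> eps / 2 * real m" using chi_j_pos by (intro mult_right_mono) (auto simp: field_simps)
    then show ?thesis
      using cond_entropy_part_nonneg[of "conv_pow (pmf_of_set {x, y}) k" "dyadic_part d lam (int l - a + int m)" cond_part]
      by linarith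
  qed
qed

lemma entropy_bound:
  "1 / real m * cond_entropy_part (conv_pow (pmf_of_set {x, y}) k)
      (dyadic_part d lam (int l - a + int m))
      (join (dyadic_part d lam (int l - a)) (preimage_part ({1..d}-{j}) (dyadic_part d lam (int l - a + int m))))
     > chi lam j - eps"
proof -
  have "0 < 4 / eps" using eps by simp
  then have m_pos: "real m > 0" using m(1) by linarith
  then have "2 / real m < eps / 2" using m(1) eps by (simp add: field_simps)
  then have "chi lam j - eps < (chi lam j * real m - 2 - eps * real m / 2) / real m"
    using m_pos by (simp add: field_simps)
  also have "\<dots> \<le> cond_entropy_part (conv_pow (pmf_of_set {x, y}) k)
      (dyadic_part d lam (int l - a + int m))
      (join (dyadic_part d lam (int l - a)) (preimage_part ({1..d}-{j}) (dyadic_part d lam (int l - a + int m))))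
      / real m"
    by (rule divide_right_mono[OF cond_entropy_shifted_ge]) (use m_pos in simp)
  finally show ?thesis by simp
qed

end

section \<open>Choosing the coordinate\<close>

lemma eventually_real_gt: "eventually (\<lambda>b::nat. C < real b) sequentially"
  using filterlim_real_sequentially unfolding filterlim_at_top_dense by blast

lemma eventually_sqrt_gt: "eventually (\<lambda>c::nat. C < sqrt (real c)) sequentially"
  using filterlim_compose[OF sqrt_at_top filterlim_real_sequentially] unfolding filterlim_at_top_dense by blast

lemma eventually_powr_gt:
  fixes e C :: real
  assumes "e > 0"
  shows "eventually (\<lambda>c::nat. C < real c powr e) sequentially"
proof (rule eventually_mono[OF eventually_real_gt[of "(max C 0 + 1) powr (1 / e)"]])
  fix c :: nat assume "(max C 0 + 1) powr (1 / e) < real c"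
  then have "((max C 0 + 1) powr (1 / e)) powr e \<le> real c powr e" using assms by (intro powr_mono2) auto
  moreover have "((max C 0 + 1) powr (1 / e)) powr e = max C 0 + 1" using assms by (simp add: powr_powr)
  ultimately show "C < real c powr e" by linarith
qed

lemma eventually_two_powr_le:
  fixes c b :: real
  assumes "c > 0" and "b > 0"
  shows "eventually (\<lambda>l::nat. 2 powr (1 - c * real l) \<le> b) sequentially"
proof (rule eventually_mono[OF eventually_real_gt[of "(1 - log 2 b) / c"]])
  fix l :: nat assume "(1 - log 2 b) / c < real l"
  then have "1 - c * real l < log 2 b" using assms(1) by (simp add: field_simps)
  then have "2 powr (1 - c * real l) < 2 powr (log 2 b)" by simp
  then show "2 powr (1 - c * real l) \<le> b" using assms(2) by simp
qed

lemma eventually_sqrt_lt_powr: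
  fixes c c' K C :: real
  assumes "c > 0" and "c' > c" and "K > 0"
  shows "eventually (\<lambda>n::nat. C * sqrt (real n) < K * real n powr (c' / (2 * c))) sequentially"
proof -
  define e where "e = c' / (2 * c) - 1/2"
  have e: "e > 0" and exponent: "c' / (2 * c) = 1/2 + e" using assms by (simp_all add: e_def field_simps)
  show ?thesis
  proof (rule eventually_mono[OF eventually_conj[OF eventually_powr_gt[OF e, of "C / K"] eventually_ge_at_top[of 1]]])
    fix n :: nat assume n: "C / K < real n powr e \<and> 1 \<le> n"
    have eq: "real n powr (c' / (2 * c)) = sqrt (real n) * real n powr e"
      unfolding exponent by (simp add: powr_add powr_half_sqrt)
    have "C * sqrt (real n) < (K * real n powr e) * sqrt (real n)"
      using n assms(3) by (intro mult_strict_right_mono) (auto simp: divide_less_eq mult.commute)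
    then show "C * sqrt (real n) < K * real n powr (c' / (2 * c))" unfolding eq by (simp add: mult_ac)
  qed
qed

lemma abs_le_eucl_norm: "t \<in> {1..d} \<Longrightarrow> \<bar>v t\<bar> \<le> eucl_norm d v"
  unfolding eucl_norm_def by (rule real_le_rsqrt) (auto intro: member_le_sum)

lemma eucl_norm_le_sum_abs: "eucl_norm d v \<le> (\<Sum>i=1..d. \<bar>v i\<bar>)"
  using L2_set_le_sum_abs[of v "{1..d}"] unfolding eucl_norm_def L2_set_def by simp

locale entropy_choice =
  fixes d :: nat and lam :: "nat \<Rightarrow> real" and eps :: real
  assumes d: "d \<ge> 1"
    and lam: "\<forall>j\<in>{1..d}. 0 < lam j \<and> lam j < 1"
    and lam_decreasing: "\<forall>i j. 1 \<le> i \<and> i < j \<and> j \<le> d \<longrightarrow> lam j < lam i"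
    and eps: "0 < eps"
begin

definition R :: "nat \<Rightarrow> real" where
  "R t = sqrt (12 / (eps / (2 * chi lam t))) + 1"

(* For t < j, a coordinate with |y_t - x_t| < gap t j m_j l_j k_j is narrow at the scales
   chosen for j. *)
definition gap :: "nat \<Rightarrow> nat \<Rightarrow> nat \<Rightarrow> nat \<Rightarrow> nat \<Rightarrow> real" where
  "gap t j mj lj kj = 2 powr (- chi lam t * (real lj + real mj + 1)) * real kj powr (chi lam t / (2 * chi lam j))
     / (2 * R j * sqrt (real kj))"

definition threshold :: "nat \<Rightarrow> (nat \<Rightarrow> nat) \<Rightarrow> (nat \<Rightarrow> nat) \<Rightarrow> (nat \<Rightarrow> nat) \<Rightarrow> real" where
  "threshold t m l k = Min (insert (eps / real d) ((\<lambda>j. gap t j (m j) (l j) (k j)) ` {t<..d}))"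

definition m_large :: "nat \<Rightarrow> (nat \<Rightarrow> nat) \<Rightarrow> (nat \<Rightarrow> nat) \<Rightarrow> (nat \<Rightarrow> nat) \<Rightarrow> nat \<Rightarrow> bool" where
  "m_large t m l k a \<longleftrightarrow> (t \<in> {1..d} \<longrightarrow> 4 / eps < real a \<and> 2 \<le> chi lam t * real a)"

(* threshold t m l k \<le> 0 only if some later k vanishes; that case is allowed so that the
   condition holds eventually for every earlier choice. *)
definition l_large :: "nat \<Rightarrow> (nat \<Rightarrow> nat) \<Rightarrow> (nat \<Rightarrow> nat) \<Rightarrow> (nat \<Rightarrow> nat) \<Rightarrow> nat \<Rightarrow> bool" where
  "l_large t m l k b \<longleftrightarrow> (t \<in> {1..d} \<longrightarrow> threshold t m l k \<le> 0 \<or>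
     (2 powr (1 - chi lam t * real b) \<le> threshold t m l k / 2 \<and>
      2 powr (1 - chi lam t * real b) \<le> threshold t m l k / (40 * R t) \<and>
      2 powr (1 - chi lam t * real b) \<le> (eps / (2 * chi lam t)) * threshold t m l k / (192 * real d * R t)))"

definition k_large :: "nat \<Rightarrow> (nat \<Rightarrow> nat) \<Rightarrow> (nat \<Rightarrow> nat) \<Rightarrow> (nat \<Rightarrow> nat) \<Rightarrow> nat \<Rightarrow> bool" where
  "k_large t m l k c \<longleftrightarrow> (t \<in> {1..d} \<longrightarrow> 1 \<le> c \<and> 2 * R t < sqrt (real c) \<and>
     19 \<le> 2 powr (- chi lam t * (real (l t) + real (m t) + 1)) * sqrt (real c) * eps \<and>
     32 * real d * R t / sqrt (real c) \<le> (eps / (2 * chi lam t)) / 3 \<and>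
     (\<forall>t'\<in>{t<..d}. 2 * R t / eps * sqrt (real c)
        < 2 powr (- chi lam t' * (real (l t) + real (m t) + 1)) * real c powr (chi lam t' / (2 * chi lam t))))"

lemma chi_pos: "t \<in> {1..d} \<Longrightarrow> chi lam t > 0"
  using lam unfolding chi_def by auto

lemma chi_less: "t \<in> {1..d} \<Longrightarrow> t' \<in> {1..d} \<Longrightarrow> t < t' \<Longrightarrow> chi lam t < chi lam t'"
  using lam lam_decreasing unfolding chi_def by auto

lemma R_ge_1: "t \<in> {1..d} \<Longrightarrow> R t \<ge> 1"
  using chi_pos[of t] eps by (simp add: R_def)

lemma R_tail: "t \<in> {1..d} \<Longrightarrow> 2 * exp (- (R t)\<^sup>2 / 2) \<le> eps / (2 * chi lam t) / 3"
  unfolding R_def using chi_pos eps by (intro two_exp_tail_le) auto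

lemma eventually_m_large: "eventually (m_large t m l k) sequentially"
proof (cases "t \<in> {1..d}")
  case True
  show ?thesis
  proof (rule eventually_mono[OF eventually_conj[OF eventually_real_gt eventually_real_gt]])
    fix a :: nat assume "4 / eps < real a \<and> 2 / chi lam t < real a"
    then show "m_large t m l k a" using chi_pos[OF True] by (simp add: m_large_def field_simps)
  qed
qed (auto simp: m_large_def[abs_def])

lemma eventually_l_large: "eventually (l_large t m l k) sequentially"
proof (cases "t \<in> {1..d} \<and> threshold t m l k > 0")
  case True
  then have pos: "chi lam t > 0" "R t > 0" "eps / (2 * chi lam t) > 0" "real d > 0"
    using chi_pos R_ge_1 eps d by fastforce+
  have "eventually (\<lambda>b::nat. 2 powr (1 - chi lam t * real b) \<le> threshold t m l k / 2 \<and>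
      2 powr (1 - chi lam t * real b) \<le> threshold t m l k / (40 * R t) \<and>
      2 powr (1 - chi lam t * real b) \<le> (eps / (2 * chi lam t)) * threshold t m l k / (192 * real d * R t)) sequentially"
    using True pos eps by (intro eventually_conj eventually_two_powr_le) (auto intro!: divide_pos_pos mult_pos_pos)
  then show ?thesis by (rule eventually_mono) (simp add: l_large_def)
qed (auto simp: l_large_def[abs_def])

lemma eventually_k_large_others:
  assumes "t \<in> {1..d}"
  shows "eventually (\<lambda>c::nat. \<forall>t'\<in>{t<..d}. 2 * R t / eps * sqrt (real c)
    < 2 powr (- chi lam t' * (real (l t) + real (m t) + 1)) * real c powr (chi lam t' / (2 * chi lam t))) sequentially"
proof (rule eventually_ball_finite)
  show "\<forall>t'\<in>{t<..d}. eventually (\<lambda>c::nat. 2 * R t / eps * sqrt (real c)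
    < 2 powr (- chi lam t' * (real (l t) + real (m t) + 1)) * real c powr (chi lam t' / (2 * chi lam t))) sequentially"
    using assms chi_pos chi_less by (intro ballI eventually_sqrt_lt_powr) auto
qed simp

lemma eventually_k_large: "eventually (k_large t m l k) sequentially"
proof (cases "t \<in> {1..d}")
  case True
  define K where "K = 2 powr (- chi lam t * (real (l t) + real (m t) + 1))"
  define \<beta> where "\<beta> = eps / (2 * chi lam t)"
  have pos: "K > 0" "\<beta> > 0" "R t \<ge> 1" using chi_pos[OF True] eps R_ge_1[OF True] by (simp_all add: K_def \<beta>_def)
  have "eventually (\<lambda>c::nat. 19 \<le> K * sqrt (real c) * eps) sequentially"
  proof (rule eventually_mono[OF eventually_sqrt_gt[of "19 / (K * eps)"]])
    fix c :: nat assume "19 / (K * eps) < sqrt (real c)"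
    then show "19 \<le> K * sqrt (real c) * eps" using pos eps by (simp add: divide_less_eq algebra_simps)
  qed
  moreover have "eventually (\<lambda>c::nat. 32 * real d * R t / sqrt (real c) \<le> \<beta> / 3) sequentially"
  proof (rule eventually_mono[OF eventually_conj[OF eventually_sqrt_gt[of "96 * real d * R t / \<beta>"] eventually_sqrt_gt[of 0]]])
    fix c :: nat assume c: "96 * real d * R t / \<beta> < sqrt (real c) \<and> 0 < sqrt (real c)"
    then have "96 * real d * R t < sqrt (real c) * \<beta>" using pos by (simp add: pos_divide_less_eq)
    then have "32 * real d * R t \<le> \<beta> / 3 * sqrt (real c)" by (simp add: field_simps mult.commute)
    then show "32 * real d * R t / sqrt (real c) \<le> \<beta> / 3" using c by (simp add: pos_divide_le_eq)
  qed
  ultimately have "eventually (\<lambda>c::nat. 1 \<le> c \<and> 2 * R t < sqrt (real c) \<and> 19 \<le> K * sqrt (real c) * eps \<and>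
      32 * real d * R t / sqrt (real c) \<le> \<beta> / 3 \<and> (\<forall>t'\<in>{t<..d}. 2 * R t / eps * sqrt (real c)
        < 2 powr (- chi lam t' * (real (l t) + real (m t) + 1)) * real c powr (chi lam t' / (2 * chi lam t)))) sequentially"
    using eventually_k_large_others[OF True] by (intro eventually_conj eventually_ge_at_top eventually_sqrt_gt) auto
  then show ?thesis by (rule eventually_mono) (simp add: k_large_def K_def \<beta>_def)
qed (auto simp: k_large_def[abs_def])

lemma threshold_cong:
  "\<forall>i>t. m i = m' i \<and> l i = l' i \<and> k i = k' i \<Longrightarrow> threshold t m l k = threshold t m' l' k'"
  unfolding threshold_def by (intro arg_cong[where f = Min] arg_cong[where f = "insert _"] image_cong) auto

lemma l_large_cong:
  assumes "\<forall>i>t. m i = m' i \<and> l i = l' i \<and> k i = k' i"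
  shows "l_large t m l k = l_large t m' l' k'"
  using threshold_cong[OF assms] by (simp add: l_large_def fun_eq_iff)

lemma k_large_cong: "m t = m' t \<Longrightarrow> l t = l' t \<Longrightarrow> k_large t m l k = k_large t m' l' k'"
  by (simp add: k_large_def fun_eq_iff)

lemma gap_pos: "j \<in> {1..d} \<Longrightarrow> 1 \<le> kj \<Longrightarrow> gap t j mj lj kj > 0"
  using R_ge_1[of j] by (simp add: gap_def)

lemma threshold_pos:
  assumes "\<forall>t\<in>{1..d}. 1 \<le> k t"
  shows "threshold t m l k > 0"
  unfolding threshold_def using assms gap_pos eps d by (subst Min_gr_iff) auto

lemma threshold_le_eps: "threshold t m l k \<le> eps / real d"
  unfolding threshold_def by (intro Min_le) auto

lemma threshold_le_gap: "j \<in> {t<..d} \<Longrightarrow> threshold t m l k \<le> gap t j (m j) (l j) (k j)"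
  unfolding threshold_def by (intro Min_le) auto

lemma exists_coordinate_above_threshold:
  assumes "eps \<le> eucl_norm d v"
  shows "\<exists>t\<in>{1..d}. threshold t m l k \<le> \<bar>v t\<bar>"
proof (rule ccontr)
  assume "\<not> ?thesis"
  then have "\<bar>v t\<bar> < eps / real d" if "t \<in> {1..d}" for t
    using that threshold_le_eps[of t m l k] by force
  then have "(\<Sum>i=1..d. \<bar>v i\<bar>) < (\<Sum>i=1..d. eps / real d)" using d by (intro sum_strict_mono) auto
  also have "\<dots> = eps" using d by simp
  finally show False using assms eucl_norm_le_sum_abs[of d v] by linarith
qed

lemma others_narrow_if_large:
  assumes large: "k_large j m l k (k j)" and j: "j \<in> {1..d}" and k: "\<forall>t\<in>{1..d}. 1 \<le> k t"
    and below: "\<And>t. t \<in> {1..d} \<Longrightarrow> t < j \<Longrightarrow> \<bar>y t - x t\<bar> < threshold t m l k"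
    and bounded: "\<And>t. t \<in> {1..d} \<Longrightarrow> \<bar>y t - x t\<bar> \<le> 1 / eps"
    and t: "t \<in> {1..d} - {j}"
  shows "2 * (R j * sqrt (real (k j))) * \<bar>y t - x t\<bar>
    < 2 powr (- chi lam t * (real (l j) + real (m j) + 1)) * real (k j) powr (chi lam t / (2 * chi lam j))"
proof -
  have R: "0 < R j" "0 < sqrt (real (k j))" using R_ge_1[OF j] bspec[OF k j] by auto
  then have pos: "0 < 2 * (R j * sqrt (real (k j)))" by simp
  show ?thesis
  proof (cases "t < j")
    case True
    then have "\<bar>y t - x t\<bar> < gap t j (m j) (l j) (k j)"
      using below[of t] threshold_le_gap[of j t m l k] t j by fastforce
    then have "2 * (R j * sqrt (real (k j))) * \<bar>y t - x t\<bar> < 2 * (R j * sqrt (real (k j))) * gap t j (m j) (l j) (k j)"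
      using pos by (rule mult_strict_left_mono)
    then show ?thesis using R by (simp add: gap_def field_simps)
  next
    case False
    then have "t \<in> {j<..d}" using t by auto
    then have "2 * R j / eps * sqrt (real (k j))
        < 2 powr (- chi lam t * (real (l j) + real (m j) + 1)) * real (k j) powr (chi lam t / (2 * chi lam j))"
      using large j by (auto simp: k_large_def)
    moreover have "2 * (R j * sqrt (real (k j))) * \<bar>y t - x t\<bar> \<le> 2 * (R j * sqrt (real (k j))) * (1 / eps)"
      using bounded[of t] t pos by (intro mult_left_mono) auto
    ultimately show ?thesis by (simp add: field_simps)
  qed
qed

lemma scale_choice_if_large:
  assumes large: "\<forall>t\<in>{1..d}. m_large t m l k (m t) \<and> l_large t m l k (l t) \<and> k_large t m l k (k t)"
    and j: "j \<in> {1..d}" "threshold j m l k \<le> \<bar>y j - x j\<bar>"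
    and below: "\<And>t. t \<in> {1..d} \<Longrightarrow> t < j \<Longrightarrow> \<bar>y t - x t\<bar> < threshold t m l k"
    and bounded: "\<And>t. t \<in> {1..d} \<Longrightarrow> \<bar>y t - x t\<bar> \<le> 1 / eps"
  shows "scale_choice d j lam x y eps (R j) (threshold j m l k) (m j) (l j) (k j)"
proof
  have k: "\<forall>t\<in>{1..d}. 1 \<le> k t" using large by (auto simp: k_large_def)
  have pos: "0 < threshold j m l k" by (rule threshold_pos[OF k])
  have mj: "m_large j m l k (m j)" and lj: "l_large j m l k (l j)" and kj: "k_large j m l k (k j)"
    using large j(1) by auto
  show "j \<in> {1..d}" "\<forall>t\<in>{1..d}. 0 < chi lam t" "0 < eps" "1 \<le> R j"
    "2 * exp (- (R j)\<^sup>2 / 2) \<le> eps / (2 * chi lam j) / 3"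
    using j chi_pos eps R_ge_1 R_tail by auto
  show "0 < threshold j m l k" "threshold j m l k \<le> \<bar>y j - x j\<bar>" "\<bar>y j - x j\<bar> \<le> 1 / eps"
    using pos j bounded by auto
  show "4 / eps < real (m j)" "2 \<le> chi lam j * real (m j)"
    using mj j by (auto simp: m_large_def)
  show "2 powr (1 - chi lam j * real (l j)) \<le> threshold j m l k / 2"
    "2 powr (1 - chi lam j * real (l j)) \<le> threshold j m l k / (40 * R j)"
    "2 powr (1 - chi lam j * real (l j)) \<le> eps / (2 * chi lam j) * threshold j m l k / (192 * real d * R j)"
    using lj j pos by (auto simp: l_large_def)
  show "1 \<le> k j" "2 * R j < sqrt (real (k j))"
    "19 \<le> 2 powr (- chi lam j * (real (l j) + real (m j) + 1)) * sqrt (real (k j)) * eps"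
    "32 * real d * R j / sqrt (real (k j)) \<le> eps / (2 * chi lam j) / 3"
    using kj j by (auto simp: k_large_def)
  show "\<forall>t\<in>{1..d} - {j}. 2 * (R j * sqrt (real (k j))) * \<bar>y t - x t\<bar>
      < 2 powr (- chi lam t * (real (l j) + real (m j) + 1)) * real (k j) powr (chi lam t / (2 * chi lam j))"
    using kj j(1) k below bounded by (intro ballI others_narrow_if_large) auto
qed

(* j is the first coordinate with |y_j - x_j| above its threshold; all earlier coordinates
   are then below the gaps attached to j. *)
lemma entropy_bound_if_large:
  assumes large: "\<forall>t\<in>{1..d}. m_large t m l k (m t) \<and> l_large t m l k (l t) \<and> k_large t m l k (k t)"
    and norm: "eps \<le> eucl_norm d (\<lambda>i. x i - y i)" "eucl_norm d (\<lambda>i. x i - y i) \<le> 1 / eps"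
  shows "\<exists>j\<in>{1..d}.
            let a = \<lfloor>log 2 (real (k j)) / (2 * chi lam j)\<rfloor> in
            1 / real (m j) *
              cond_entropy_part (conv_pow (pmf_of_set {x, y}) (k j))
                (dyadic_part d lam (int (l j) - a + int (m j)))
                (join (dyadic_part d lam (int (l j) - a))
                      (preimage_part ({1..d} - {j}) (dyadic_part d lam (int (l j) - a + int (m j)))))
            > chi lam j - eps"
proof -
  have norm_swap: "eucl_norm d (\<lambda>i. x i - y i) = eucl_norm d (\<lambda>i. y i - x i)"
    unfolding eucl_norm_def by (simp add: power2_commute)
  define j where "j = (LEAST t. t \<in> {1..d} \<and> threshold t m l k \<le> \<bar>y t - x t\<bar>)"
  obtain t where "t \<in> {1..d}" "threshold t m l k \<le> \<bar>y t - x t\<bar>"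
    using exists_coordinate_above_threshold[of "\<lambda>i. y i - x i" m l k] norm(1) norm_swap by auto
  then have j: "j \<in> {1..d}" "threshold j m l k \<le> \<bar>y j - x j\<bar>"
    unfolding j_def by (metis (mono_tags, lifting) LeastI)+
  have "\<bar>y t - x t\<bar> < threshold t m l k" if "t \<in> {1..d}" "t < j" for t
    using not_less_Least[of t "\<lambda>t. t \<in> {1..d} \<and> threshold t m l k \<le> \<bar>y t - x t\<bar>"] that
    unfolding j_def[symmetric] by auto
  moreover have "\<bar>y t - x t\<bar> \<le> 1 / eps" if "t \<in> {1..d}" for t
    using abs_le_eucl_norm[OF that, of "\<lambda>i. y i - x i"] norm(2) norm_swap by simp
  ultimately interpret scale_choice d j lam x y eps "R j" "threshold j m l k" "m j" "l j" "k j"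
    using scale_choice_if_large[where m = m and l = l and k = k and j = j and x = x and y = y, OF large j] by blast
  show ?thesis using entropy_bound j(1) unfolding Let_def by blast
qed

end

theorem corollary3p7:
  fixes d :: nat and lam :: "nat \<Rightarrow> real" and eps :: real
  assumes "d \<ge> 1"
    and "\<forall>j\<in>{1..d}. 0 < lam j \<and> lam j < 1"
    and "\<forall>i j. 1 \<le> i \<and> i < j \<and> j \<le> d \<longrightarrow> lam j < lam i"
    and "0 < eps" and "eps < 1"
  shows "large_choice d
    (\<lambda>m l k. (\<forall>j\<in>{1..d}. 0 < m j \<and> 0 < l j \<and> 0 < k j) \<longrightarrow>
      (\<forall>x y :: nat \<Rightarrow> real.
         (\<forall>i. i \<notin> {1..d} \<longrightarrow> x i = 0 \<and> y i = 0) \<longrightarrow>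
         eps \<le> eucl_norm d (\<lambda>i. x i - y i) \<longrightarrow> eucl_norm d (\<lambda>i. x i - y i) \<le> 1 / eps \<longrightarrow>
         (\<exists>j\<in>{1..d}.
            let a = \<lfloor>log 2 (real (k j)) / (2 * chi lam j)\<rfloor> in
            1 / real (m j) *
              cond_entropy_part (conv_pow (pmf_of_set {x, y}) (k j))
                (dyadic_part d lam (int (l j) - a + int (m j)))
                (join (dyadic_part d lam (int (l j) - a))
                      (preimage_part ({1..d} - {j}) (dyadic_part d lam (int (l j) - a + int (m j)))))
            > chi lam j - eps)))
    (\<lambda>_. 0) (\<lambda>_. 0) (\<lambda>_. 0)"
proof -
  interpret entropy_choice d lam eps
    using assms(1-4) by unfold_locales
  show ?thesis
  proof (rule large_choice_intro[where Am = m_large and Al = l_large and Ak = k_large])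
    show "eventually (m_large t m l k) sequentially" "eventually (l_large t m l k) sequentially"
      "eventually (k_large t m l k) sequentially" for t m l k
      by (rule eventually_m_large eventually_l_large eventually_k_large)+
    show "m_large t m l k = m_large t m' l' k'" for t m l k m' l' k'
      by (simp add: m_large_def fun_eq_iff)
    show "l_large t m l k = l_large t m' l' k'" if "\<forall>i>t. m i = m' i \<and> l i = l' i \<and> k i = k' i" for t m l k m' l' k'
      using that by (rule l_large_cong)
    show "k_large t m l k = k_large t m' l' k'" if "m t = m' t" "l t = l' t" for t m l k m' l' k'
      using that by (rule k_large_cong)
  qed (use entropy_bound_if_large in blast)
qed

end
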